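(* Let $k,n,m,t$ be positive integers. The sum, over all $\pi\in NC^k(n)$ with exactly $m$ blocks, of the number of blocks of $\pi$ of size $tk$ equals $$\binom{nk}{m-1}\binom{n-t-1}{m-2}.$$
   Context: A partition $\pi$ of $[N]=\{1,\dots,N\}$ is non-crossing if there are no $1\le a<b<c<d\le N$ with $a,c$ in one block and $b,d$ in another. $NC^k(n)$ is the set of non-crossing partitions of $[kn]$ all of whose blocks have size divisible by $k$. Binomial coefficients: for integers $a,b$, $\binom{a}{b}=\frac{a!}{b!(a-b)!}$ if $0\le b\le a$, $\binom{-1}{-1}=1$, and $\binom{a}{b}=0$ otherwise. *)

theory Defs
  imports Main "HOL-Library.Disjoint_Sets"
begin

definition noncrossing :: "nat set set \<Rightarrow> bool" where
  "noncrossing P \<longleftrightarrow>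
     \<not> (\<exists>B1\<in>P. \<exists>B2\<in>P. B1 \<noteq> B2 \<and>
          (\<exists>a b c d. a < b \<and> b < c \<and> c < d \<and> a \<in> B1 \<and> c \<in> B1 \<and> b \<in> B2 \<and> d \<in> B2))"

definition NCk :: "nat \<Rightarrow> nat \<Rightarrow> nat set set set" where
  "NCk k n = {P. partition_on {1..k*n} P \<and> noncrossing P \<and> (\<forall>B\<in>P. k dvd card B)}"

text \<open>Binomial coefficient on integers with the paper's convention:
 a!/(b!(a-b)!) if 0 \<le> b \<le> a, binom(-1,-1) = 1, and 0 otherwise.\<close>
definition ibinom :: "int \<Rightarrow> int \<Rightarrow> int" where
  "ibinom a b = (if 0 \<le> b \<and> b \<le> a then int (nat a choose nat b)
                 else if a = -1 \<and> b = -1 then 1 else 0)"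

end

theory Submission
  imports Defs
begin

text \<open>
  Call a noncrossing partition of a finite set \<open>T \<subseteq> \<nat>\<close> rooted if every block other than
  the root, the block of \<open>Min T\<close>, has size divisible by \<open>k\<close>.  The partitions in \<open>NC\<^sup>k(n)\<close>
  with \<open>m\<close> blocks are the rooted partitions of \<open>{0..kn}\<close> with root \<open>{0}\<close> and \<open>m + 1\<close> blocks.

  Deleting \<open>t\<^sub>0 = Min T\<close> is a bijection between rooted partitions of \<open>T\<close> and pairs \<open>(P', j)\<close>
  where \<open>P'\<close> is rooted on \<open>T - {t\<^sub>0}\<close> and \<open>jk\<close> is at most the size of its root; in the other
  direction the first \<open>jk\<close> elements of the root of \<open>P'\<close> become a block of their own and
  \<open>t\<^sub>0\<close> joins the rest.  Noncrossing is what forces, when \<open>t\<^sub>0\<close> and \<open>Min (T - {t\<^sub>0})\<close> lie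
  in different blocks, the block of \<open>Min (T - {t\<^sub>0})\<close> to precede the rest of the root.
  Hence the number of rooted partitions with given root size and number of blocks, and the
  number of their non-root blocks of size \<open>uk\<close>, satisfy linear recursions in \<open>|T|\<close>.  Explicit
  binomial expressions satisfy the same recursions by Pascal's rule, and the theorem is the case
  of root size 1.
\<close>

section \<open>Noncrossing partitions\<close>

lemma noncrossingI:
  assumes "\<And>B1 B2 a b c d. B1 \<in> P \<Longrightarrow> B2 \<in> P \<Longrightarrow> B1 \<noteq> B2 \<Longrightarrow> a < b \<Longrightarrow> b < c \<Longrightarrow> c < d \<Longrightarrow>
             a \<in> B1 \<Longrightarrow> c \<in> B1 \<Longrightarrow> b \<in> B2 \<Longrightarrow> d \<in> B2 \<Longrightarrow> False"
  shows "noncrossing P"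
  unfolding noncrossing_def using assms by meson

lemma noncrossingD:
  assumes "noncrossing P" "B1 \<in> P" "B2 \<in> P" "a < b" "b < c" "c < d"
    "a \<in> B1" "c \<in> B1" "b \<in> B2" "d \<in> B2"
  shows "B1 = B2"
  using assms unfolding noncrossing_def by meson

lemma noncrossing_refine:
  assumes nc: "noncrossing P"
    and sub: "\<And>X. X \<in> Q \<Longrightarrow> g X \<in> P \<and> X \<subseteq> g X"
    and split: "\<And>X Y a b c d. X \<in> Q \<Longrightarrow> Y \<in> Q \<Longrightarrow> X \<noteq> Y \<Longrightarrow> g X = g Y \<Longrightarrow>
                  a < b \<Longrightarrow> b < c \<Longrightarrow> c < d \<Longrightarrow> a \<in> X \<Longrightarrow> c \<in> X \<Longrightarrow> b \<in> Y \<Longrightarrow> d \<in> Y \<Longrightarrow> False"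
  shows "noncrossing Q"
proof (rule noncrossingI)
  fix X Y a b c d
  assume XY: "X \<in> Q" "Y \<in> Q" "X \<noteq> Y" and ord: "a < b" "b < c" "c < d"
    and mem: "a \<in> X" "c \<in> X" "b \<in> Y" "d \<in> Y"
  have "g X = g Y"
    using noncrossingD[OF nc _ _ ord] sub[OF XY(1)] sub[OF XY(2)] mem by blast
  then show False using split[OF XY _ ord mem] by blast
qed

lemma noncrossing_insert_least:
  fixes t :: nat
  assumes nc: "noncrossing P" and part: "partition_on A P" and R: "R \<in> P" "Min A \<in> R"
    and fin: "finite A" and least: "\<And>x. x \<in> A \<Longrightarrow> t < x"
  shows "noncrossing (insert (insert t R) (P - {R}))"
proof (rule noncrossingI)
  have disj: "X \<inter> R = {}" if "X \<in> P - {R}" for X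
    using partition_onD2[OF part] R(1) that by (auto dest: disjointD)
  have inA: "x \<in> A" if "x \<in> X" "X \<in> P" for x X
    using partition_onD1[OF part] that by blast
  have above_min: "Min A < x" if "x \<in> X" "X \<in> P - {R}" for x X
  proof -
    have "x \<in> A" using inA that by blast
    moreover have "x \<noteq> Min A" using disj[OF that(2)] R(2) that(1) by blast
    ultimately show ?thesis using Min_le[OF fin] by (simp add: order.not_eq_order_implies_strict)
  qed
  fix X Y a b c d
  assume XY: "X \<in> insert (insert t R) (P - {R})" "Y \<in> insert (insert t R) (P - {R})" "X \<noteq> Y"
    and ord: "a < b" "b < c" "c < d" and mem: "a \<in> X" "c \<in> X" "b \<in> Y" "d \<in> Y"
  consider "X = insert t R" "Y \<in> P - {R}" | "X \<in> P - {R}" "Y = insert t R" | "X \<in> P - {R}" "Y \<in> P - {R}"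
    using XY by blast
  then show False
  proof cases
    case 1
    have "t < b" using least inA 1(2) mem(3) by blast
    then have "c \<in> R" using 1(1) mem(2) ord(2) by auto
    have "Min A < b" using above_min 1(2) mem(3) by blast
    then have "R = Y" using noncrossingD[OF nc R(1) _ _ ord(2,3) R(2) \<open>c \<in> R\<close> mem(3,4)] 1(2) by blast
    with 1(2) show False by blast
  next
    case 2
    have "t < a" using least inA 2(1) mem(1) by blast
    then have "b \<in> R" "d \<in> R" using 2(2) mem(3,4) ord by auto
    then have "X = R" using noncrossingD[OF nc _ R(1) ord mem(1,2)] 2(1) by blast
    with 2(1) show False by blast
  next
    case 3
    then show False using noncrossingD[OF nc _ _ ord mem] XY(3) by blast
  qed
qed

lemma partition_on_replace:
  assumes P: "partition_on A P" and Rs: "Rs \<subseteq> P" and Bs: "partition_on C Bs"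
    and disj: "(A - \<Union>Rs) \<inter> C = {}"
  shows "partition_on ((A - \<Union>Rs) \<union> C) ((P - Rs) \<union> Bs)"
proof -
  have "\<Union>(P - Rs) = A - \<Union>Rs"
    using partition_onD1[OF P] partition_onD2[OF P] Rs by (auto dest: disjointD)
  moreover have "disjoint (P - Rs)"
    using partition_onD2[OF P] by (rule pairwise_subset) blast
  ultimately show ?thesis
    using Bs disj disjoint_union partition_onD3[OF P]
    unfolding partition_on_def by (metis Diff_iff Un_iff Union_Un_distrib)
qed

definition block_of :: "'a set set \<Rightarrow> 'a \<Rightarrow> 'a set" where
  "block_of P x = (THE B. B \<in> P \<and> x \<in> B)"

lemma block_of_eq:
  assumes "partition_on A P" "B \<in> P" "x \<in> B"
  shows "block_of P x = B"
  unfolding block_of_def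
  using assms partition_onD2[OF assms(1)] by (intro the_equality) (auto dest: disjointD)

lemma block_of_mem:
  assumes "partition_on A P" "x \<in> A"
  shows "block_of P x \<in> P" "x \<in> block_of P x"
proof -
  obtain B where "B \<in> P" "x \<in> B" using assms partition_onD1 by blast
  then show "block_of P x \<in> P" "x \<in> block_of P x" using block_of_eq[OF assms(1)] by simp_all
qed

definition initial_seg :: "'a :: linorder set \<Rightarrow> nat \<Rightarrow> 'a set" where
  "initial_seg R l = set (take l (sorted_list_of_set R))"

lemma initial_seg:
  assumes "finite R" "l \<le> card R"
  shows "initial_seg R l \<subseteq> R" "card (initial_seg R l) = l"
    "\<And>x y. x \<in> initial_seg R l \<Longrightarrow> y \<in> R - initial_seg R l \<Longrightarrow> x < y"
proof -
  let ?L = "sorted_list_of_set R"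
  have split: "set (take l ?L) \<union> set (drop l ?L) = R"
    using assms(1) by (metis append_take_drop_id set_append set_sorted_list_of_set)
  then show "initial_seg R l \<subseteq> R" unfolding initial_seg_def by blast
  show "card (initial_seg R l) = l" unfolding initial_seg_def
    using assms by (simp add: distinct_card)
  have sorted: "sorted_wrt (<) (take l ?L @ drop l ?L)" using assms(1) by simp
  fix x y assume "x \<in> initial_seg R l" "y \<in> R - initial_seg R l"
  then show "x < y" using split sorted unfolding initial_seg_def sorted_wrt_append by blast
qed

lemma initial_segs_eq:
  fixes F G :: "'a :: linorder set"
  assumes "finite R" "F \<subseteq> R" "G \<subseteq> R" "card F = card G"
    and F: "\<And>x y. x \<in> F \<Longrightarrow> y \<in> R - F \<Longrightarrow> x < y"
    and G: "\<And>x y. x \<in> G \<Longrightarrow> y \<in> R - G \<Longrightarrow> x < y"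
  shows "F = G"
proof (rule ccontr)
  assume "F \<noteq> G"
  have fin: "finite F" "finite G" using assms(1-3) finite_subset by blast+
  have "\<not> F \<subseteq> G" using \<open>F \<noteq> G\<close> card_subset_eq[OF fin(2)] assms(4) by blast
  moreover have "\<not> G \<subseteq> F" using \<open>F \<noteq> G\<close> card_subset_eq[OF fin(1)] assms(4) by metis
  ultimately obtain x y where "x \<in> F - G" "y \<in> G - F" by blast
  then have "x < y" "y < x" using F[of x y] G[of y x] assms(2,3) by auto
  then show False by simp
qed

lemma initial_seg_unique:
  assumes "finite R" "F \<subseteq> R" "\<And>x y. x \<in> F \<Longrightarrow> y \<in> R - F \<Longrightarrow> x < y"
  shows "initial_seg R (card F) = F"
proof (rule initial_segs_eq[OF assms(1) _ assms(2) _ _ assms(3)])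
  have "card F \<le> card R" using card_mono[OF assms(1,2)] .
  from initial_seg[OF assms(1) this]
  show "initial_seg R (card F) \<subseteq> R" "card (initial_seg R (card F)) = card F"
    "\<And>x y. x \<in> initial_seg R (card F) \<Longrightarrow> y \<in> R - initial_seg R (card F) \<Longrightarrow> x < y" by blast+
qed

section \<open>Rooted partitions and deletion of the least point\<close>

definition NC_rooted :: "nat \<Rightarrow> nat set \<Rightarrow> nat set set set" where
  "NC_rooted k T = {P. partition_on T P \<and> noncrossing P \<and> (\<forall>B\<in>P. Min T \<notin> B \<longrightarrow> k dvd card B)}"

lemma finite_NC_rooted: "finite T \<Longrightarrow> finite (NC_rooted k T)"
  unfolding NC_rooted_def by (rule rev_finite_subset[OF finitely_many_partition_on]) auto

text \<open>
  In \<open>add_min t a P l\<close>, \<open>t\<close> is a new point below the ground set of \<open>P\<close> and \<open>a\<close> its least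
  element: the first \<open>l\<close> elements of the block of \<open>a\<close> become a block of their own and \<open>t\<close>
  joins the rest.  \<open>del_min\<close> undoes this and also returns \<open>l\<close>.
\<close>
definition add_min :: "nat \<Rightarrow> nat \<Rightarrow> nat set set \<Rightarrow> nat \<Rightarrow> nat set set" where
  "add_min t a P l = (P - {block_of P a}) \<union> {insert t (block_of P a - initial_seg (block_of P a) l)}
      \<union> (if l = 0 then {} else {initial_seg (block_of P a) l})"

definition del_min :: "nat \<Rightarrow> nat \<Rightarrow> nat set set \<Rightarrow> nat set set \<times> nat" where
  "del_min t a P =
    (if a \<in> block_of P t then ((P - {block_of P t}) \<union> {block_of P t - {t}}, 0)
     else ((P - {block_of P t, block_of P a}) \<union> {(block_of P t - {t}) \<union> block_of P a}, card (block_of P a)))"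

locale min_split =
  fixes k :: nat and T T' :: "nat set" and t0 \<alpha> :: nat
  assumes k_pos: "0 < k" and finite_T: "finite T" and t0_eq: "t0 = Min T" and T'_eq: "T' = T - {t0}"
    and T'_nonempty: "T' \<noteq> {}" and alpha_eq: "\<alpha> = Min T'"
begin

lemma finite_T': "finite T'"
  using finite_T T'_eq by simp

lemma t0_in_T: "t0 \<in> T"
proof -
  have "T \<noteq> {}" using T'_eq T'_nonempty by blast
  then show ?thesis using t0_eq finite_T by simp
qed

lemma T_eq_insert: "T = insert t0 T'"
  using t0_in_T T'_eq by auto

lemma t0_notin_T': "t0 \<notin> T'"
  using T'_eq by simp

lemma card_T': "card T' = card T - 1"
  using finite_T t0_in_T T'_eq by simp

lemma t0_less: "x \<in> T' \<Longrightarrow> t0 < x"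
  using T'_eq t0_eq finite_T by (simp add: order.not_eq_order_implies_strict)

lemma alpha_in_T': "\<alpha> \<in> T'"
  using alpha_eq finite_T' T'_nonempty by simp

lemma alpha_le: "x \<in> T' \<Longrightarrow> \<alpha> \<le> x"
  using alpha_eq finite_T' by simp

lemma mem_NC_rooted_T:
  "P \<in> NC_rooted k T \<longleftrightarrow> partition_on T P \<and> noncrossing P \<and> (\<forall>B\<in>P. t0 \<notin> B \<longrightarrow> k dvd card B)"
  unfolding NC_rooted_def t0_eq by simp

lemma mem_NC_rooted_T':
  "P \<in> NC_rooted k T' \<longleftrightarrow> partition_on T' P \<and> noncrossing P \<and> (\<forall>B\<in>P. \<alpha> \<notin> B \<longrightarrow> k dvd card B)"
  unfolding NC_rooted_def alpha_eq by simp

end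

locale add_min_setting = min_split +
  fixes P' :: "nat set set" and l :: nat
  assumes P'_mem: "P' \<in> NC_rooted k T'" and k_dvd_l: "k dvd l" and l_le: "l \<le> card (block_of P' \<alpha>)"
begin

definition "R' = block_of P' \<alpha>"
definition "S = initial_seg R' l"
definition "N = insert t0 (R' - S)"

lemma P'_partition: "partition_on T' P'" and P'_noncrossing: "noncrossing P'"
  and P'_dvd: "B \<in> P' \<Longrightarrow> \<alpha> \<notin> B \<Longrightarrow> k dvd card B"
  using P'_mem mem_NC_rooted_T' by auto

lemma R'_mem: "R' \<in> P'" and alpha_in_R': "\<alpha> \<in> R'"
  using block_of_mem[OF P'_partition alpha_in_T'] R'_def by auto

lemma R'_sub: "R' \<subseteq> T'"
  using partition_onD1[OF P'_partition] R'_mem by blast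

lemma finite_R': "finite R'"
  using R'_sub finite_T' finite_subset by blast

lemma S_sub: "S \<subseteq> R'" and card_S: "card S = l"
  and S_below: "x \<in> S \<Longrightarrow> y \<in> R' - S \<Longrightarrow> x < y"
  using initial_seg[OF finite_R' l_le[folded R'_def]] unfolding S_def by auto

lemma S_empty_iff: "S = {} \<longleftrightarrow> l = 0"
  using card_S S_sub finite_R' finite_subset by fastforce

lemma alpha_in_S: "l \<noteq> 0 \<Longrightarrow> \<alpha> \<in> S"
proof (rule ccontr)
  assume "l \<noteq> 0" "\<alpha> \<notin> S"
  then obtain x where "x \<in> S" using S_empty_iff by blast
  then have "x < \<alpha>" "\<alpha> \<le> x"
    using S_below \<open>\<alpha> \<notin> S\<close> alpha_in_R' alpha_le S_sub R'_sub by blast+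
  then show False by simp
qed

lemma alpha_in_N_iff: "\<alpha> \<in> N \<longleftrightarrow> l = 0"
  using alpha_in_S S_empty_iff alpha_in_R' alpha_in_T' t0_notin_T' unfolding N_def by auto

lemma N_notin: "N \<notin> P'"
  using partition_onD1[OF P'_partition] t0_notin_T' unfolding N_def by blast

lemma other_block_disjoint: "X \<in> P' \<Longrightarrow> X \<noteq> R' \<Longrightarrow> X \<inter> R' = {}"
  using partition_onD2[OF P'_partition] R'_mem by (auto dest: disjointD)

lemma S_notin: "l \<noteq> 0 \<Longrightarrow> S \<notin> P' - {R'}"
  using other_block_disjoint S_sub S_empty_iff by blast

lemma add_min_eq: "add_min t0 \<alpha> P' l = (P' - {R'}) \<union> ({N} \<union> (if l = 0 then {} else {S}))"
  unfolding add_min_def R'_def S_def N_def by auto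

lemma mem_add_min: "X \<in> add_min t0 \<alpha> P' l \<longleftrightarrow> (X \<in> P' \<and> X \<noteq> R') \<or> X = N \<or> (l \<noteq> 0 \<and> X = S)"
  unfolding add_min_eq by auto

lemma add_min_partition: "partition_on T (add_min t0 \<alpha> P' l)"
proof -
  have new: "partition_on (insert t0 R') ({N} \<union> (if l = 0 then {} else {S}))"
  proof (cases "l = 0")
    case True
    then show ?thesis using S_empty_iff partition_on_space[of "insert t0 R'"] unfolding N_def by simp
  next
    case False
    have "N \<inter> S = {}" using t0_notin_T' R'_sub S_sub unfolding N_def by blast
    then show ?thesis using False S_empty_iff S_sub unfolding N_def
      by (intro partition_onI) (auto simp: disjnt_def)
  qed
  have "(T' - \<Union>{R'}) \<inter> insert t0 R' = {}" using t0_notin_T' by blast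
  from partition_on_replace[OF P'_partition _ new this] R'_mem
  have "partition_on ((T' - R') \<union> insert t0 R') (add_min t0 \<alpha> P' l)"
    unfolding add_min_eq by simp
  moreover have "(T' - R') \<union> insert t0 R' = T" using R'_sub T_eq_insert by blast
  ultimately show ?thesis by simp
qed

lemma N_S_not_crossing:
  assumes XY: "{X, Y} = {N, S}" and ord: "a < b" "b < c" "c < d"
    and mem: "a \<in> X" "c \<in> X" "b \<in> Y" "d \<in> Y"
  shows False
proof -
  have S_above: "t0 < x" if "x \<in> S" for x using that S_sub R'_sub t0_less by blast
  have N_above: "x \<in> R' - S" if "x \<in> N" "t0 < x" for x using that unfolding N_def by auto
  consider "X = N" "Y = S" | "X = S" "Y = N" using XY by (auto simp: doubleton_eq_iff)
  then show False
  proof cases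
    case 1
    then have "c \<in> R' - S" using N_above S_above mem ord by (meson order.strict_trans)
    then show False using S_below 1 mem(4) ord(3) by fastforce
  next
    case 2
    then have "b \<in> R' - S" using N_above S_above mem ord by (meson order.strict_trans)
    then show False using S_below 2 mem(2) ord(2) by fastforce
  qed
qed

lemma add_min_noncrossing: "noncrossing (add_min t0 \<alpha> P' l)"
proof -
  let ?R = "insert t0 R'"
  let ?g = "\<lambda>X. if X = N \<or> X = S then ?R else X"
  have "Min T' \<in> R'" using alpha_in_R' alpha_eq by metis
  from noncrossing_insert_least[OF P'_noncrossing P'_partition R'_mem this finite_T' t0_less]
  have nc: "noncrossing (insert ?R (P' - {R'}))" .
  have old: "X \<noteq> N \<and> X \<noteq> S \<and> X \<noteq> ?R" if X: "X \<in> P' - {R'}" for X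
  proof (intro conjI)
    show "X \<noteq> N" using X N_notin by (metis DiffD1)
    show "X \<noteq> S" using X S_notin partition_onD3[OF P'_partition] S_empty_iff by (metis DiffD1)
    have "t0 \<notin> X" using X partition_onD1[OF P'_partition] t0_notin_T' by blast
    then show "X \<noteq> ?R" by blast
  qed
  show ?thesis
  proof (rule noncrossing_refine[OF nc, where g = ?g])
    fix X assume "X \<in> add_min t0 \<alpha> P' l"
    then consider "X \<in> P' - {R'}" | "X = N" | "X = S" unfolding mem_add_min by blast
    then show "?g X \<in> insert ?R (P' - {R'}) \<and> X \<subseteq> ?g X"
    proof cases
      case 1
      then show ?thesis using old by simp
    qed (use S_sub in \<open>auto simp: N_def\<close>)
  next
    fix X Y a b c d
    assume XY: "X \<in> add_min t0 \<alpha> P' l" "Y \<in> add_min t0 \<alpha> P' l" "X \<noteq> Y" "?g X = ?g Y"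
      and ord: "a < b" "b < c" "c < d" and mem: "a \<in> X" "c \<in> X" "b \<in> Y" "d \<in> Y"
    have not_old: "U \<notin> P' - {R'}" if "?g U = ?g V" "U \<noteq> V" for U V
    proof
      assume "U \<in> P' - {R'}"
      with old have "?g U = U" "U \<noteq> ?R" by simp_all
      with that show False by (simp split: if_splits)
    qed
    have "X \<notin> P' - {R'}" "Y \<notin> P' - {R'}"
      using not_old[OF XY(4,3)] not_old[OF XY(4)[symmetric] XY(3)[symmetric]] by blast+
    then have "X \<in> {N, S}" "Y \<in> {N, S}" using XY(1,2) unfolding mem_add_min by auto
    then have "{X, Y} = {N, S}" using XY(3) by auto
    from N_S_not_crossing[OF this ord mem] show False .
  qed
qed

lemma add_min_dvd:
  assumes B: "B \<in> add_min t0 \<alpha> P' l" and t0: "t0 \<notin> B"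
  shows "k dvd card B"
proof -
  consider "B \<in> P'" "B \<noteq> R'" | "B = N" | "B = S" using B unfolding mem_add_min by blast
  then show ?thesis
  proof cases
    case 1
    then have "\<alpha> \<notin> B" using other_block_disjoint alpha_in_R' by blast
    with 1(1) show ?thesis by (rule P'_dvd)
  next
    case 2
    with t0 show ?thesis unfolding N_def by simp
  qed (use card_S k_dvd_l in simp)
qed

lemma add_min_mem: "add_min t0 \<alpha> P' l \<in> NC_rooted k T"
  using add_min_partition add_min_noncrossing add_min_dvd mem_NC_rooted_T by blast

lemma block_of_add_min_t0: "block_of (add_min t0 \<alpha> P' l) t0 = N"
  by (rule block_of_eq[OF add_min_partition]) (auto simp: mem_add_min N_def)

lemma block_of_add_min_alpha: "l \<noteq> 0 \<Longrightarrow> block_of (add_min t0 \<alpha> P' l) \<alpha> = S"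
  by (rule block_of_eq[OF add_min_partition _ alpha_in_S]) (auto simp: mem_add_min)

lemma t0_notin_S: "t0 \<notin> S"
  using S_sub R'_sub t0_notin_T' by blast

lemma S_ne_N: "S \<noteq> N"
  using t0_notin_S unfolding N_def by auto

lemma card_N: "card N = card R' - l + 1"
proof -
  have "card (R' - S) = card R' - l"
    using card_Diff_subset[OF finite_subset[OF S_sub finite_R'] S_sub] card_S by simp
  moreover have "t0 \<notin> R' - S" using R'_sub t0_notin_T' by blast
  ultimately show ?thesis using finite_R' unfolding N_def by simp
qed

lemma card_add_min: "card (add_min t0 \<alpha> P' l) = card P' + (if l = 0 then 0 else 1)"
proof -
  have fin: "finite P'" using finite_elements[OF finite_T' P'_partition] .
  have base: "card ((P' - {R'}) \<union> {N}) = card P'"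
    using card.remove[OF fin R'_mem] fin N_notin by simp
  show ?thesis
  proof (cases "l = 0")
    case True
    then show ?thesis unfolding add_min_eq using base by simp
  next
    case False
    then have "S \<notin> (P' - {R'}) \<union> {N}" using S_notin S_ne_N by simp
    then show ?thesis unfolding add_min_eq using False base fin by (simp add: Un_assoc[symmetric])
  qed
qed

lemma card_add_min_blocks:
  "card {B \<in> add_min t0 \<alpha> P' l. B \<noteq> N \<and> card B = q}
   = card {B \<in> P'. B \<noteq> R' \<and> card B = q} + (if l \<noteq> 0 \<and> q = l then 1 else 0)"
proof -
  let ?A = "{B \<in> P'. B \<noteq> R' \<and> card B = q}"
  let ?new = "if l \<noteq> 0 \<and> q = l then {S} else {}"
  have eq: "{B \<in> add_min t0 \<alpha> P' l. B \<noteq> N \<and> card B = q} = ?A \<union> ?new"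
  proof (rule set_eqI)
    fix B
    show "B \<in> {B \<in> add_min t0 \<alpha> P' l. B \<noteq> N \<and> card B = q} \<longleftrightarrow> B \<in> ?A \<union> ?new"
    proof (cases "B = S")
      case True
      have "S \<notin> P' - {R'}" using S_notin S_empty_iff partition_onD3[OF P'_partition] by (cases "l = 0") simp_all
      then show ?thesis using True mem_add_min[of S] S_ne_N card_S by auto
    next
      case False
      then show ?thesis using mem_add_min[of B] N_notin by (cases "B = N") simp_all
    qed
  qed
  have fin: "finite ?A" using finite_elements[OF finite_T' P'_partition] by simp
  show ?thesis
  proof (cases "l \<noteq> 0 \<and> q = l")
    case True
    then have "S \<notin> ?A" using S_notin by blast
    with fin have "card (?A \<union> {S}) = card ?A + 1" by simp
    with True show ?thesis unfolding eq by presburger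
  next
    case False
    then have "?new = {}" by auto
    then show ?thesis unfolding eq using False by simp
  qed
qed

lemma del_min_add_min: "del_min t0 \<alpha> (add_min t0 \<alpha> P' l) = (P', l)"
proof (cases "l = 0")
  case True
  then have "S = {}" using S_empty_iff by simp
  then have "add_min t0 \<alpha> P' l - {N} = P' - {R'}" "N - {t0} = R'"
    using True N_notin t0_notin_T' R'_sub unfolding add_min_eq N_def by auto
  moreover have "\<alpha> \<in> N" using True alpha_in_N_iff by simp
  ultimately show ?thesis
    using True R'_mem unfolding del_min_def block_of_add_min_t0 by auto
next
  case False
  then have "add_min t0 \<alpha> P' l - {N, S} = P' - {R'}"
    using N_notin S_notin S_ne_N unfolding add_min_eq by auto
  moreover have "(N - {t0}) \<union> S = R'"
    using t0_notin_T' R'_sub S_sub unfolding N_def by auto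
  moreover have "\<alpha> \<notin> N" using False alpha_in_N_iff by simp
  ultimately show ?thesis
    using False R'_mem card_S
    unfolding del_min_def block_of_add_min_t0 block_of_add_min_alpha[OF False] by auto
qed

end

locale del_min_setting = min_split +
  fixes P :: "nat set set"
  assumes P_mem: "P \<in> NC_rooted k T"
begin

definition "R = block_of P t0"
definition "A = block_of P \<alpha>"
definition "M = (R - {t0}) \<union> A"

lemma P_partition: "partition_on T P" and P_noncrossing: "noncrossing P"
  and P_dvd: "B \<in> P \<Longrightarrow> t0 \<notin> B \<Longrightarrow> k dvd card B"
  using P_mem mem_NC_rooted_T by auto

lemma R_mem: "R \<in> P" and t0_in_R: "t0 \<in> R"
  using block_of_mem[OF P_partition t0_in_T] R_def by auto

lemma A_mem: "A \<in> P" and alpha_in_A: "\<alpha> \<in> A"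
  using block_of_mem[OF P_partition] alpha_in_T' T_eq_insert A_def by auto

lemma block_sub: "X \<in> P \<Longrightarrow> X \<subseteq> T"
  using partition_onD1[OF P_partition] by blast

lemma blocks_disjoint: "X \<in> P \<Longrightarrow> Y \<in> P \<Longrightarrow> X \<noteq> Y \<Longrightarrow> X \<inter> Y = {}"
  using partition_onD2[OF P_partition] by (auto dest: disjointD)

lemma t0_notin_block: "X \<in> P \<Longrightarrow> X \<noteq> R \<Longrightarrow> t0 \<notin> X"
  using blocks_disjoint R_mem t0_in_R by blast

lemma finite_block: "X \<in> P \<Longrightarrow> finite X"
  using block_sub finite_T finite_subset by blast

context
  assumes alpha_in_R: "\<alpha> \<in> R"
begin

definition "P1 = (P - {R}) \<union> {R - {t0}}"

lemma mem_P1: "X \<in> P1 \<longleftrightarrow> (X \<in> P \<and> X \<noteq> R) \<or> X = R - {t0}"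
  unfolding P1_def by blast

lemma R_minus_t0_notin: "R - {t0} \<notin> P"
proof
  assume "R - {t0} \<in> P"
  moreover have "R - {t0} \<noteq> R" using t0_in_R by blast
  ultimately have "(R - {t0}) \<inter> R = {}" using blocks_disjoint R_mem by blast
  then show False using alpha_in_R alpha_in_T' t0_notin_T' by blast
qed

lemma P1_partition: "partition_on T' P1"
proof -
  have "partition_on (R - {t0}) {R - {t0}}"
    using alpha_in_R alpha_in_T' t0_notin_T' by (intro partition_on_space) blast
  from partition_on_replace[OF P_partition _ this, of "{R}"] R_mem
  have "partition_on ((T - R) \<union> (R - {t0})) P1" unfolding P1_def by auto
  moreover have "(T - R) \<union> (R - {t0}) = T'" using block_sub[OF R_mem] t0_in_R T'_eq by blast
  ultimately show ?thesis by simp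
qed

lemma P1_noncrossing: "noncrossing P1"
proof (rule noncrossing_refine[OF P_noncrossing, where g = "\<lambda>X. if X = R - {t0} then R else X"])
  fix X assume "X \<in> P1"
  then show "(if X = R - {t0} then R else X) \<in> P \<and> X \<subseteq> (if X = R - {t0} then R else X)"
    unfolding mem_P1 using R_mem by auto
next
  fix X Y a b c d
  assume "X \<in> P1" "Y \<in> P1" "X \<noteq> Y"
    and "(if X = R - {t0} then R else X) = (if Y = R - {t0} then R else Y)"
  then show False unfolding mem_P1 by (auto split: if_splits)
qed

lemma P1_mem: "P1 \<in> NC_rooted k T'"
  unfolding mem_NC_rooted_T'
proof (intro conjI ballI impI P1_partition P1_noncrossing)
  fix B assume "B \<in> P1" "\<alpha> \<notin> B"
  then have "B \<in> P" "B \<noteq> R" unfolding mem_P1 using alpha_in_R alpha_in_T' t0_notin_T' by auto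
  then show "k dvd card B" using P_dvd t0_notin_block by blast
qed

lemma block_of_P1_alpha: "block_of P1 \<alpha> = R - {t0}"
  using alpha_in_R alpha_in_T' t0_notin_T' by (intro block_of_eq[OF P1_partition]) (auto simp: mem_P1)

lemma add_min_P1: "add_min t0 \<alpha> P1 0 = P"
proof -
  have "initial_seg (R - {t0}) 0 = {}" unfolding initial_seg_def by simp
  moreover have "P1 - {R - {t0}} = P - {R}" unfolding P1_def using R_minus_t0_notin by blast
  moreover have "insert t0 (R - {t0}) = R" using t0_in_R by blast
  ultimately show ?thesis unfolding add_min_def block_of_P1_alpha using R_mem by auto
qed

lemma del_min_in_root: "del_min t0 \<alpha> P = (P1, 0)"
  unfolding del_min_def P1_def using alpha_in_R R_def by simp

end

context
  assumes alpha_notin_R: "\<alpha> \<notin> R"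
begin

definition "P2 = (P - {R, A}) \<union> {M}"

lemma mem_P2: "X \<in> P2 \<longleftrightarrow> (X \<in> P \<and> X \<noteq> R \<and> X \<noteq> A) \<or> X = M"
  unfolding P2_def by blast

lemma mem_M: "x \<in> M \<longleftrightarrow> (x \<in> R \<and> x \<noteq> t0) \<or> x \<in> A"
  unfolding M_def by blast

lemma A_ne_R: "A \<noteq> R"
  using alpha_notin_R alpha_in_A by blast

lemma A_R_disjoint: "A \<inter> R = {}"
  using blocks_disjoint[OF A_mem R_mem A_ne_R] .

lemma t0_notin_A: "t0 \<notin> A"
  using A_R_disjoint t0_in_R by blast

lemma other_block_above_alpha:
  assumes "X \<in> P" "X \<noteq> A" "x \<in> X" "x \<noteq> t0"
  shows "\<alpha> < x"
proof -
  have "x \<in> T'" using assms block_sub T_eq_insert by blast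
  moreover have "x \<noteq> \<alpha>" using blocks_disjoint[OF assms(1) A_mem assms(2)] assms(3) alpha_in_A by blast
  ultimately show ?thesis using alpha_le by (simp add: order.not_eq_order_implies_strict)
qed

text \<open>Otherwise \<open>t0 < \<alpha> < y < x\<close> would make the root cross the block of \<open>\<alpha>\<close>.\<close>
lemma A_below_root:
  assumes x: "x \<in> A" and y: "y \<in> R" "y \<noteq> t0"
  shows "x < y"
proof (rule ccontr)
  assume "\<not> x < y"
  moreover have "x \<noteq> y" using x y A_R_disjoint by blast
  ultimately have "y < x" by simp
  moreover have "\<alpha> < y" using other_block_above_alpha[OF R_mem A_ne_R[symmetric] y] .
  moreover have "t0 < \<alpha>" using t0_less alpha_in_T' by blast
  ultimately have "R = A" using noncrossingD[OF P_noncrossing R_mem A_mem] t0_in_R y(1) alpha_in_A x by blast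
  then show False using A_ne_R by simp
qed

lemma P2_partition: "partition_on T' P2"
proof -
  have "M \<noteq> {}" using alpha_in_A unfolding M_def by blast
  then have M: "partition_on M {M}" by (rule partition_on_space)
  have "{R, A} \<subseteq> P" using R_mem A_mem by blast
  moreover have "(T - \<Union>{R, A}) \<inter> M = {}" unfolding M_def by blast
  ultimately have "partition_on ((T - \<Union>{R, A}) \<union> M) P2"
    using partition_on_replace[OF P_partition _ M] unfolding P2_def by blast
  then have "partition_on ((T - (R \<union> A)) \<union> M) P2" by simp
  moreover have "(T - (R \<union> A)) \<union> M = T'"
    using block_sub[OF R_mem] block_sub[OF A_mem] t0_in_R t0_notin_A T'_eq unfolding M_def by blast
  ultimately show ?thesis by simp
qed

lemma M_not_crossing:
  assumes X: "X \<in> P" "X \<noteq> R" "X \<noteq> A" and ord: "a < b" "b < c" "c < d"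
  shows "\<not> (a \<in> M \<and> c \<in> M \<and> b \<in> X \<and> d \<in> X)" and "\<not> (a \<in> X \<and> c \<in> X \<and> b \<in> M \<and> d \<in> M)"
proof
  note nc = noncrossingD[OF P_noncrossing]
  assume mem: "a \<in> M \<and> c \<in> M \<and> b \<in> X \<and> d \<in> X"
  have "t0 < b" using t0_less block_sub[OF X(1)] t0_notin_block[OF X(1,2)] mem T_eq_insert by blast
  from mem consider "a \<in> R" "c \<in> R" | "a \<in> R" "a \<noteq> t0" "c \<in> A" | "a \<in> A" "c \<in> R" "c \<noteq> t0"
    | "a \<in> A" "c \<in> A" unfolding mem_M by blast
  then show False
  proof cases
    case 3
    then have "R = X" using nc[OF R_mem X(1) \<open>t0 < b\<close> ord(2,3) t0_in_R] mem by blast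
    with X show False by simp
  qed (use nc[OF R_mem X(1) ord] nc[OF A_mem X(1) ord] A_below_root X mem ord in force)+
next
  note nc = noncrossingD[OF P_noncrossing]
  show "\<not> (a \<in> X \<and> c \<in> X \<and> b \<in> M \<and> d \<in> M)"
  proof
    assume mem: "a \<in> X \<and> c \<in> X \<and> b \<in> M \<and> d \<in> M"
    from mem consider "b \<in> R" "d \<in> R" | "b \<in> R" "b \<noteq> t0" "d \<in> A" | "b \<in> A" "d \<in> R" "d \<noteq> t0"
      | "b \<in> A" "d \<in> A" unfolding mem_M by blast
    then show False
    proof cases
      case 3
      have "\<alpha> < a" using other_block_above_alpha X mem t0_notin_block by blast
      then have "A = X" using nc[OF A_mem X(1) _ ord(1,2) alpha_in_A] 3 mem by blast
      with X show False by simp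
    qed (use nc[OF X(1) R_mem ord] nc[OF X(1) A_mem ord] A_below_root X mem ord in force)+
  qed
qed

lemma P2_noncrossing: "noncrossing P2"
proof (rule noncrossingI)
  fix X Y a b c d
  assume XY: "X \<in> P2" "Y \<in> P2" "X \<noteq> Y" and ord: "a < b" "b < c" "c < d"
    and mem: "a \<in> X" "c \<in> X" "b \<in> Y" "d \<in> Y"
  consider "X \<in> P" "Y \<in> P" | "X \<in> P" "X \<noteq> R" "X \<noteq> A" "Y = M" | "X = M" "Y \<in> P" "Y \<noteq> R" "Y \<noteq> A"
    using XY unfolding mem_P2 by blast
  then show False
  proof cases
    case 1
    then show False using noncrossingD[OF P_noncrossing _ _ ord mem] XY(3) by blast
  qed (use M_not_crossing ord mem in blast)+
qed

lemma P2_mem: "P2 \<in> NC_rooted k T'"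
  unfolding mem_NC_rooted_T'
proof (intro conjI ballI impI P2_partition P2_noncrossing)
  fix B assume "B \<in> P2" "\<alpha> \<notin> B"
  then have "B \<in> P" "B \<noteq> R" unfolding mem_P2 using alpha_in_A mem_M by auto
  then show "k dvd card B" using P_dvd t0_notin_block by blast
qed

lemma block_of_P2_alpha: "block_of P2 \<alpha> = M"
  using alpha_in_A by (intro block_of_eq[OF P2_partition]) (auto simp: mem_P2 mem_M)

lemma k_dvd_card_A: "k dvd card A"
  using P_dvd A_mem t0_notin_A by blast

lemma card_A_le: "card A \<le> card M"
  using finite_block R_mem A_mem unfolding M_def by (intro card_mono) auto

lemma add_min_P2: "add_min t0 \<alpha> P2 (card A) = P"
proof -
  have "A \<subseteq> M" unfolding M_def by blast
  then have "initial_seg M (card A) = A"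
    using finite_block R_mem A_mem A_below_root mem_M
    by (intro initial_seg_unique) (auto simp: M_def)
  moreover have "insert t0 (M - A) = R" using A_R_disjoint t0_in_R unfolding M_def by blast
  moreover have "M \<notin> P - {R, A}"
  proof
    assume "M \<in> P - {R, A}"
    then have "M \<inter> A = {}" using blocks_disjoint A_mem by blast
    then show False using alpha_in_A mem_M by blast
  qed
  then have "P2 - {M} = P - {R, A}" unfolding P2_def by blast
  moreover have "card A \<noteq> 0" using finite_block A_mem alpha_in_A by auto
  ultimately show ?thesis unfolding add_min_def block_of_P2_alpha using R_mem A_mem by auto
qed

lemma del_min_outside_root: "del_min t0 \<alpha> P = (P2, card A)"
  unfolding del_min_def P2_def M_def using alpha_notin_R R_def A_def by simp

end

end

context min_split
begin

definition "root_splits = (SIGMA P':NC_rooted k T'. {j. j * k \<le> card (block_of P' \<alpha>)})"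

lemma add_min_setting_of_root_splits:
  assumes "(P', j) \<in> root_splits"
  shows "add_min_setting k T T' t0 \<alpha> P' (j * k)"
  using assms unfolding root_splits_def by unfold_locales auto

lemma del_min_inverse:
  assumes "P \<in> NC_rooted k T"
  shows "(fst (del_min t0 \<alpha> P), snd (del_min t0 \<alpha> P) div k) \<in> root_splits"
    and "k dvd snd (del_min t0 \<alpha> P)"
    and "add_min t0 \<alpha> (fst (del_min t0 \<alpha> P)) (snd (del_min t0 \<alpha> P)) = P"
proof -
  interpret del_min_setting k T T' t0 \<alpha> P by unfold_locales (rule assms)
  have "(fst (del_min t0 \<alpha> P), snd (del_min t0 \<alpha> P) div k) \<in> root_splits
        \<and> k dvd snd (del_min t0 \<alpha> P)
        \<and> add_min t0 \<alpha> (fst (del_min t0 \<alpha> P)) (snd (del_min t0 \<alpha> P)) = P"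
  proof (cases "\<alpha> \<in> R")
    case True
    then show ?thesis using del_min_in_root P1_mem add_min_P1 unfolding root_splits_def by simp
  next
    case False
    then show ?thesis
      using del_min_outside_root P2_mem block_of_P2_alpha card_A_le k_dvd_card_A add_min_P2
      unfolding root_splits_def by simp
  qed
  then show "(fst (del_min t0 \<alpha> P), snd (del_min t0 \<alpha> P) div k) \<in> root_splits"
    and "k dvd snd (del_min t0 \<alpha> P)"
    and "add_min t0 \<alpha> (fst (del_min t0 \<alpha> P)) (snd (del_min t0 \<alpha> P)) = P" by blast+
qed

lemma bij_betw_add_min: "bij_betw (\<lambda>(P', j). add_min t0 \<alpha> P' (j * k)) root_splits (NC_rooted k T)"
proof (rule bij_betw_byWitness[where f' = "\<lambda>P. (fst (del_min t0 \<alpha> P), snd (del_min t0 \<alpha> P) div k)"])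
  show "\<forall>x\<in>root_splits. (\<lambda>P. (fst (del_min t0 \<alpha> P), snd (del_min t0 \<alpha> P) div k))
          ((\<lambda>(P', j). add_min t0 \<alpha> P' (j * k)) x) = x"
    using add_min_setting.del_min_add_min[OF add_min_setting_of_root_splits] k_pos by auto
  show "\<forall>P\<in>NC_rooted k T. (\<lambda>(P', j). add_min t0 \<alpha> P' (j * k))
          (fst (del_min t0 \<alpha> P), snd (del_min t0 \<alpha> P) div k) = P"
    using del_min_inverse(2,3) by simp
  show "(\<lambda>(P', j). add_min t0 \<alpha> P' (j * k)) ` root_splits \<subseteq> NC_rooted k T"
    using add_min_setting.add_min_mem[OF add_min_setting_of_root_splits] by auto
  show "(\<lambda>P. (fst (del_min t0 \<alpha> P), snd (del_min t0 \<alpha> P) div k)) ` NC_rooted k T \<subseteq> root_splits"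
    using del_min_inverse(1) by auto
qed

lemma finite_root_splits: "finite {j. j * k \<le> r}"
proof (rule finite_subset)
  have "j \<le> j * k" for j using k_pos by simp
  then show "{j. j * k \<le> r} \<subseteq> {..r}" using le_trans by blast
qed simp

lemma sum_NC_rooted_split:
  "(\<Sum>P\<in>NC_rooted k T. f P) = (\<Sum>P'\<in>NC_rooted k T'. \<Sum>j | j * k \<le> card (block_of P' \<alpha>). f (add_min t0 \<alpha> P' (j * k)))"
proof -
  have "(\<Sum>P\<in>NC_rooted k T. f P) = (\<Sum>(P', j)\<in>root_splits. f (add_min t0 \<alpha> P' (j * k)))"
    using sum.reindex_bij_betw[OF bij_betw_add_min, of f] by (simp add: case_prod_unfold)
  also have "\<dots> = (\<Sum>P'\<in>NC_rooted k T'. \<Sum>j | j * k \<le> card (block_of P' \<alpha>). f (add_min t0 \<alpha> P' (j * k)))"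
    unfolding root_splits_def using finite_NC_rooted[OF finite_T'] finite_root_splits
    by (subst sum.Sigma) auto
  finally show ?thesis .
qed

lemma root_card_bounds:
  assumes "P' \<in> NC_rooted k T'"
  shows "1 \<le> card (block_of P' \<alpha>)" "card (block_of P' \<alpha>) < card T"
proof -
  have part: "partition_on T' P'" using assms by (simp add: mem_NC_rooted_T')
  note mem = block_of_mem[OF part alpha_in_T']
  have sub: "block_of P' \<alpha> \<subseteq> T'" using partition_onD1[OF part] mem(1) by blast
  have "block_of P' \<alpha> \<noteq> {}" using mem(2) by blast
  then show "1 \<le> card (block_of P' \<alpha>)"
    using finite_subset[OF sub finite_T'] by (simp add: Suc_le_eq card_gt_0_iff)
  have "card (block_of P' \<alpha>) \<le> card T'" using card_mono[OF finite_T' sub] .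
  also have "\<dots> < card T" unfolding T'_eq using finite_T t0_in_T by (rule card_Diff1_less)
  finally show "card (block_of P' \<alpha>) < card T" .

qed

lemma add_min_counts:
  assumes "(P', j) \<in> root_splits"
  defines "Q \<equiv> add_min t0 \<alpha> P' (j * k)"
  shows "card (block_of Q t0) = card (block_of P' \<alpha>) - j * k + 1"
    and "card Q = card P' + (if j = 0 then 0 else 1)"
    and "card {B \<in> Q. B \<noteq> block_of Q t0 \<and> card B = u * k}
         = card {B \<in> P'. B \<noteq> block_of P' \<alpha> \<and> card B = u * k} + (if j \<noteq> 0 \<and> u = j then 1 else 0)"
proof -
  note L = add_min_setting_of_root_splits[OF assms(1)]
  note root = add_min_setting.block_of_add_min_t0[OF L, folded Q_def]
    add_min_setting.R'_def[OF L, symmetric]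
  show "card (block_of Q t0) = card (block_of P' \<alpha>) - j * k + 1"
    using add_min_setting.card_N[OF L] unfolding root .
  show "card Q = card P' + (if j = 0 then 0 else 1)"
    using add_min_setting.card_add_min[OF L] k_pos unfolding Q_def by simp
  show "card {B \<in> Q. B \<noteq> block_of Q t0 \<and> card B = u * k}
         = card {B \<in> P'. B \<noteq> block_of P' \<alpha> \<and> card B = u * k} + (if j \<noteq> 0 \<and> u = j then 1 else 0)"
    using add_min_setting.card_add_min_blocks[OF L, of "u * k"] k_pos unfolding Q_def[symmetric] root by simp
qed

end

section \<open>Recursions for the counts\<close>

lemma sum_root_split_sizes:
  fixes \<phi> :: "nat \<Rightarrow> nat" and k r N s p c :: nat
  assumes k: "0 < k" and r: "1 \<le> r" "r < N" and s: "1 \<le> s"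
  shows "(\<Sum>j | j * k \<le> r. if r - j * k + 1 = s \<and> p + (if j = 0 then 0 else 1) = c then \<phi> j else 0)
    = (if 2 \<le> s \<and> r = s - 1 \<and> p = c then \<phi> 0 else 0)
      + (if 1 \<le> c then (\<Sum>j = 1..N. if r = s - 1 + j * k \<and> p = c - 1 then \<phi> j else 0) else 0)"
proof -
  have "j \<le> N" if "j * k \<le> r" for j
  proof -
    have "j \<le> j * k" using k by simp
    then show ?thesis using that r(2) by linarith
  qed
  then have range: "{j. j * k \<le> r} = insert 0 {j \<in> {1..N}. j * k \<le> r}" by auto
  have "(\<Sum>j | j * k \<le> r. if r - j * k + 1 = s \<and> p + (if j = 0 then 0 else 1) = c then \<phi> j else 0)
     = (if r + 1 = s \<and> p = c then \<phi> 0 else 0)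
       + (\<Sum>j = 1..N. if j * k \<le> r then (if r - j * k + 1 = s \<and> p + 1 = c then \<phi> j else 0) else 0)"
  proof -
    have "(\<Sum>j \<in> {j \<in> {1..N}. j * k \<le> r}. if r - j * k + 1 = s \<and> p + (if j = 0 then 0 else 1) = c then \<phi> j else 0)
       = (\<Sum>j = 1..N. if j * k \<le> r then (if r - j * k + 1 = s \<and> p + 1 = c then \<phi> j else 0) else 0)"
      by (subst sum.inter_filter) (auto intro: sum.cong)
    then show ?thesis unfolding range by simp
  qed
  also have "(if r + 1 = s \<and> p = c then \<phi> 0 else 0) = (if 2 \<le> s \<and> r = s - 1 \<and> p = c then \<phi> 0 else 0)"
    using r s by auto
  also have "(\<Sum>j = 1..N. if j * k \<le> r then (if r - j * k + 1 = s \<and> p + 1 = c then \<phi> j else 0) else 0)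
     = (if 1 \<le> c then (\<Sum>j = 1..N. if r = s - 1 + j * k \<and> p = c - 1 then \<phi> j else 0) else 0)"
    using s by (auto intro!: sum.cong)
  finally show ?thesis .
qed

context min_split
begin

lemma sum_NC_rooted_by_root:
  fixes w :: "nat set set \<Rightarrow> nat" and v :: "nat set set \<Rightarrow> nat \<Rightarrow> nat"
  assumes s: "1 \<le> s"
    and wv: "\<And>P' j. (P', j) \<in> root_splits \<Longrightarrow> w (add_min t0 \<alpha> P' (j * k)) = v P' j"
  shows "(\<Sum>P\<in>NC_rooted k T. if card (block_of P t0) = s \<and> card P = c then w P else 0)
    = (\<Sum>P'\<in>NC_rooted k T'. (if 2 \<le> s \<and> card (block_of P' \<alpha>) = s - 1 \<and> card P' = c then v P' 0 else 0)
      + (if 1 \<le> c then (\<Sum>j = 1..card T. if card (block_of P' \<alpha>) = s - 1 + j * k \<and> card P' = c - 1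
                                        then v P' j else 0) else 0))"
proof -
  have "(\<Sum>P\<in>NC_rooted k T. if card (block_of P t0) = s \<and> card P = c then w P else 0)
    = (\<Sum>P'\<in>NC_rooted k T'. \<Sum>j | j * k \<le> card (block_of P' \<alpha>).
         if card (block_of P' \<alpha>) - j * k + 1 = s \<and> card P' + (if j = 0 then 0 else 1) = c then v P' j else 0)"
    unfolding sum_NC_rooted_split
    using add_min_counts(1,2) wv unfolding root_splits_def by (intro sum.cong) auto
  also have "\<dots> = (\<Sum>P'\<in>NC_rooted k T'. (if 2 \<le> s \<and> card (block_of P' \<alpha>) = s - 1 \<and> card P' = c then v P' 0 else 0)
      + (if 1 \<le> c then (\<Sum>j = 1..card T. if card (block_of P' \<alpha>) = s - 1 + j * k \<and> card P' = c - 1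
                                        then v P' j else 0) else 0))"
    using sum_root_split_sizes[OF k_pos _ _ s] root_card_bounds by (intro sum.cong) auto
  finally show ?thesis .
qed

end

definition nc_count :: "nat \<Rightarrow> nat set \<Rightarrow> nat \<Rightarrow> nat \<Rightarrow> nat" where
  "nc_count k T s c = card {P \<in> NC_rooted k T. card (block_of P (Min T)) = s \<and> card P = c}"

definition nc_block_count :: "nat \<Rightarrow> nat \<Rightarrow> nat set \<Rightarrow> nat \<Rightarrow> nat \<Rightarrow> nat" where
  "nc_block_count k u T s c = (\<Sum>P \<in> {P \<in> NC_rooted k T. card (block_of P (Min T)) = s \<and> card P = c}.
     card {B \<in> P. B \<noteq> block_of P (Min T) \<and> card B = u * k})"

lemma nc_count_eq_sum:
  "finite T \<Longrightarrow> nc_count k T s c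
     = (\<Sum>P\<in>NC_rooted k T. if card (block_of P (Min T)) = s \<and> card P = c then 1 else 0)"
  unfolding nc_count_def by (simp add: sum.inter_filter[symmetric] finite_NC_rooted)

lemma nc_block_count_eq_sum:
  "finite T \<Longrightarrow> nc_block_count k u T s c
     = (\<Sum>P\<in>NC_rooted k T. if card (block_of P (Min T)) = s \<and> card P = c
          then card {B \<in> P. B \<noteq> block_of P (Min T) \<and> card B = u * k} else 0)"
  unfolding nc_block_count_def by (simp add: sum.inter_filter finite_NC_rooted)

lemma sum_plus_if_swap:
  fixes a :: "'x \<Rightarrow> nat" and b :: "'x \<Rightarrow> 'y \<Rightarrow> nat"
  assumes "finite X" "finite Y"
  shows "(\<Sum>x\<in>X. a x + (if C then \<Sum>y\<in>Y. b x y else 0))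
       = (\<Sum>x\<in>X. a x) + (if C then \<Sum>y\<in>Y. \<Sum>x\<in>X. b x y else 0)"
  by (simp add: sum.distrib sum.swap[of b Y X])

context min_split
begin

lemma nc_count_rec:
  assumes s: "1 \<le> s"
  shows "nc_count k T s c = (if 2 \<le> s then nc_count k T' (s - 1) c else 0)
     + (if 1 \<le> c then (\<Sum>j = 1..card T. nc_count k T' (s - 1 + j * k) (c - 1)) else 0)"
proof -
  have "nc_count k T s c = (\<Sum>P'\<in>NC_rooted k T'.
         (if 2 \<le> s \<and> card (block_of P' \<alpha>) = s - 1 \<and> card P' = c then 1 else 0)
       + (if 1 \<le> c then (\<Sum>j = 1..card T. if card (block_of P' \<alpha>) = s - 1 + j * k \<and> card P' = c - 1
                                          then 1 else 0) else 0))"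
    unfolding nc_count_eq_sum[OF finite_T] t0_eq[symmetric]
    by (rule sum_NC_rooted_by_root[OF s, where v = "\<lambda>_ _. 1"]) simp
  also have "\<dots> = (if 2 \<le> s then nc_count k T' (s - 1) c else 0)
     + (if 1 \<le> c then (\<Sum>j = 1..card T. nc_count k T' (s - 1 + j * k) (c - 1)) else 0)"
    unfolding sum_plus_if_swap[OF finite_NC_rooted[OF finite_T'] finite_atLeastAtMost]
      nc_count_eq_sum[OF finite_T'] alpha_eq[symmetric] by (simp add: sum.If_cases)
  finally show ?thesis .
qed

lemma nc_block_count_rec:
  assumes s: "1 \<le> s" and u: "1 \<le> u"
  shows "nc_block_count k u T s c = (if 2 \<le> s then nc_block_count k u T' (s - 1) c else 0)
     + (if 1 \<le> c then (\<Sum>j = 1..card T. nc_block_count k u T' (s - 1 + j * k) (c - 1))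
                        + (if u \<le> card T then nc_count k T' (s - 1 + u * k) (c - 1) else 0) else 0)"
proof -
  define w' where "w' P' = card {B \<in> P'. B \<noteq> block_of P' \<alpha> \<and> card B = u * k}" for P'
  define v where "v P' j = w' P' + (if j \<noteq> 0 \<and> u = j then 1 else 0)" for P' j
  let ?root = "\<lambda>P' s c. card (block_of P' \<alpha>) = s \<and> card P' = c"
  have "nc_block_count k u T s c = (\<Sum>P'\<in>NC_rooted k T'.
         (if 2 \<le> s \<and> ?root P' (s - 1) c then v P' 0 else 0)
       + (if 1 \<le> c then (\<Sum>j = 1..card T. if ?root P' (s - 1 + j * k) (c - 1) then v P' j else 0) else 0))"
    unfolding nc_block_count_eq_sum[OF finite_T] t0_eq[symmetric]
    by (rule sum_NC_rooted_by_root[OF s]) (use add_min_counts(3) in \<open>simp add: v_def w'_def\<close>)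
  also have "\<dots> = (if 2 \<le> s then nc_block_count k u T' (s - 1) c else 0)
     + (if 1 \<le> c then (\<Sum>j = 1..card T. \<Sum>P'\<in>NC_rooted k T'.
                          if ?root P' (s - 1 + j * k) (c - 1) then v P' j else 0) else 0)"
    unfolding sum_plus_if_swap[OF finite_NC_rooted[OF finite_T'] finite_atLeastAtMost]
      nc_block_count_eq_sum[OF finite_T'] alpha_eq[symmetric]
    by (simp add: v_def w'_def cong: if_cong)
  also have "(\<Sum>j = 1..card T. \<Sum>P'\<in>NC_rooted k T'. if ?root P' (s - 1 + j * k) (c - 1) then v P' j else 0)
      = (\<Sum>j = 1..card T. nc_block_count k u T' (s - 1 + j * k) (c - 1)
                          + (if j = u then nc_count k T' (s - 1 + u * k) (c - 1) else 0))"
  proof (rule sum.cong[OF refl])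
    fix j assume "j \<in> {1..card T}"
    then have "(if ?root P' (s - 1 + j * k) (c - 1) then v P' j else 0)
      = (if ?root P' (s - 1 + j * k) (c - 1) then w' P' else 0)
        + (if j = u then (if ?root P' (s - 1 + u * k) (c - 1) then 1 else 0) else 0)" for P'
      unfolding v_def by auto
    then show "(\<Sum>P'\<in>NC_rooted k T'. if ?root P' (s - 1 + j * k) (c - 1) then v P' j else 0)
      = nc_block_count k u T' (s - 1 + j * k) (c - 1) + (if j = u then nc_count k T' (s - 1 + u * k) (c - 1) else 0)"
      unfolding nc_block_count_eq_sum[OF finite_T'] nc_count_eq_sum[OF finite_T'] alpha_eq[symmetric] w'_def
      by (simp add: sum.distrib)
  qed
  also have "\<dots> = (\<Sum>j = 1..card T. nc_block_count k u T' (s - 1 + j * k) (c - 1))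
        + (if u \<le> card T then nc_count k T' (s - 1 + u * k) (c - 1) else 0)"
    using u by (simp add: sum.distrib)
  finally show ?thesis .
qed

end

section \<open>Closed forms\<close>

definition int_choose :: "int \<Rightarrow> int \<Rightarrow> int" where
  "int_choose a b = (if 0 \<le> b \<and> b \<le> a then int (nat a choose nat b) else 0)"

lemma int_choose_neg: "b < 0 \<Longrightarrow> int_choose a b = 0"
  unfolding int_choose_def by simp

lemma int_choose_neg_top: "a < 0 \<Longrightarrow> int_choose a b = 0"
  unfolding int_choose_def by simp

lemma int_choose_gt: "a < b \<Longrightarrow> int_choose a b = 0"
  unfolding int_choose_def by simp

lemma int_choose_0: "0 \<le> a \<Longrightarrow> int_choose a 0 = 1"
  unfolding int_choose_def by simp

lemma int_choose_1: "1 \<le> a \<Longrightarrow> int_choose a 1 = a"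
  unfolding int_choose_def by simp

lemma int_choose_of_nat: "int_choose (int a) (int b) = int (a choose b)"
  unfolding int_choose_def by auto

lemma int_choose_pascal:
  assumes "1 \<le> a"
  shows "int_choose a b = int_choose (a - 1) b + int_choose (a - 1) (b - 1)"
proof (cases "b \<le> 0")
  case True
  then show ?thesis using assms by (cases "b = 0") (simp_all add: int_choose_def)
next
  case False
  define A B where "A = nat (a - 1)" and "B = nat (b - 1)"
  have ab: "a = int (Suc A)" "b = int (Suc B)" using assms False unfolding A_def B_def by simp_all
  have "int_choose a b = int (Suc A choose Suc B)" using int_choose_of_nat[of "Suc A" "Suc B"] ab by simp
  also have "\<dots> = int (A choose Suc B) + int (A choose B)" by simp
  also have "\<dots> = int_choose (a - 1) b + int_choose (a - 1) (b - 1)"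
    using int_choose_of_nat[of A "Suc B"] int_choose_of_nat[of A B] ab by simp
  finally show ?thesis .
qed

lemma sum_shifted_telescope:
  fixes F D :: "nat \<Rightarrow> nat \<Rightarrow> int"
  assumes D0: "\<And>s. 1 \<le> s \<Longrightarrow> D 0 s = 0"
    and step: "\<And>n s. 1 \<le> s \<Longrightarrow> D (Suc n) s = F n (s + k - 1) + D n (s + k)"
    and s: "1 \<le> s"
  shows "(\<Sum>j = 1..n. F (n - j) (s - 1 + j * k)) = D n s"
  using s
proof (induction n arbitrary: s)
  case 0
  then show ?case using D0 by simp
next
  case (Suc n)
  have "(\<Sum>j = 1..Suc n. F (Suc n - j) (s - 1 + j * k))
      = F n (s - 1 + k) + (\<Sum>j = Suc 1..Suc n. F (Suc n - j) (s - 1 + j * k))"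
    by (subst sum.atLeast_Suc_atMost) simp_all
  also have "(\<Sum>j = Suc 1..Suc n. F (Suc n - j) (s - 1 + j * k)) = (\<Sum>i = 1..n. F (n - i) (s + k - 1 + i * k))"
    unfolding sum.shift_bounds_cl_Suc_ivl using Suc.prems by (intro sum.cong) (simp_all add: algebra_simps)
  also have "\<dots> = D n (s + k)"
  proof -
    have "s + k - 1 + i * k = s + k + i * k - 1" for i using Suc.prems by simp
    then show ?thesis using Suc.IH[of "s + k"] Suc.prems by simp
  qed
  finally show ?case using step[OF Suc.prems] Suc.prems by (simp add: algebra_simps)
qed

definition count_formula :: "nat \<Rightarrow> nat \<Rightarrow> nat \<Rightarrow> nat \<Rightarrow> int" where
  "count_formula k n s c = (if n = 0 then (if c = 1 then 1 else 0)
     else int_choose (int n - 1) (int c - 2) * int_choose (int (n * k + s)) (int c - 1)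
        - int k * int_choose (int n) (int c - 1) * int_choose (int (n * k + s) - 1) (int c - 2))"

lemma count_formula_0: "count_formula k 0 s c = (if c = 1 then 1 else 0)"
  unfolding count_formula_def by simp

lemma count_formula_no_blocks: "count_formula k n s 0 = 0"
  unfolding count_formula_def by (simp add: int_choose_neg)

lemma count_formula_1:
  assumes "1 \<le> k"
  shows "count_formula k 1 s c = (if c = 2 then int s else 0)"
proof -
  have g: "count_formula k 1 s c = int_choose 0 (int c - 2) * int_choose (int (k + s)) (int c - 1)
      - int k * int_choose 1 (int c - 1) * int_choose (int (k + s) - 1) (int c - 2)"
    unfolding count_formula_def by simp
  consider "c \<le> 1" | "c = 2" | "c = 3" | "4 \<le> c" by linarith
  then show ?thesis
  proof cases
    case 1
    then show ?thesis unfolding g by (simp add: int_choose_neg)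
  next
    case 2
    have "int_choose (int (k + s)) 1 = int (k + s)" "int_choose (int (k + s) - 1) 0 = 1"
      using assms by (simp_all add: int_choose_0 int_choose_1)
    then show ?thesis unfolding g using 2 by (simp add: int_choose_0 int_choose_1)
  next
    case 3
    then show ?thesis unfolding g by (simp add: int_choose_gt)
  next
    case 4
    then have "int_choose 0 (int c - 2) = 0" "int_choose 1 (int c - 1) = 0" by (simp_all add: int_choose_gt)
    then show ?thesis unfolding g using 4 by simp
  qed
qed

lemma count_formula_step:
  assumes k: "1 \<le> k" and s: "1 \<le> s" and c: "1 \<le> c"
  shows "count_formula k (n + 1) s c - count_formula k (n + 1) (s - 1) c
       = count_formula k n (s + k - 1) (c - 1) + (count_formula k n (s + k) c - count_formula k n (s + k - 1) c)"
proof (cases "n = 0")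
  case True
  then show ?thesis unfolding True add_0 count_formula_1[OF k] count_formula_0 using s by auto
next
  case False
  then have n: "1 \<le> n" by simp
  define X where "X = int ((n + 1) * k + s) - 1"
  define C where "C = int c"
  define m where "m = int n"
  have "(n + 1) * k \<ge> 1 * k" by (rule mult_le_mono1) simp
  then have X1: "1 \<le> X" using k s unfolding X_def by linarith
  have i1: "int ((n + 1) * k + s) = X + 1" unfolding X_def by simp
  have i2: "int ((n + 1) * k + (s - 1)) = X" unfolding X_def using s by simp
  have i3: "int (n * k + (s + k - 1)) = X" unfolding X_def using s by (simp add: algebra_simps)
  have i4: "int (n * k + (s + k)) = X + 1" unfolding X_def by (simp add: algebra_simps)
  have e1: "count_formula k (n + 1) s c
      = int_choose m (C - 2) * int_choose (X + 1) (C - 1) - int k * int_choose (m + 1) (C - 1) * int_choose X (C - 2)"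
    unfolding count_formula_def i1 C_def m_def by (simp add: algebra_simps)
  have e2: "count_formula k (n + 1) (s - 1) c
      = int_choose m (C - 2) * int_choose X (C - 1) - int k * int_choose (m + 1) (C - 1) * int_choose (X - 1) (C - 2)"
    unfolding count_formula_def i2 C_def m_def by (simp add: algebra_simps)
  have e3: "count_formula k n (s + k - 1) (c - 1)
      = int_choose (m - 1) (C - 3) * int_choose X (C - 2) - int k * int_choose m (C - 2) * int_choose (X - 1) (C - 3)"
    unfolding count_formula_def i3 C_def m_def using n c by (simp add: of_nat_diff)
  have e4: "count_formula k n (s + k) c
      = int_choose (m - 1) (C - 2) * int_choose (X + 1) (C - 1) - int k * int_choose m (C - 1) * int_choose X (C - 2)"
    unfolding count_formula_def i4 C_def m_def using n by simp
  have e5: "count_formula k n (s + k - 1) c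
      = int_choose (m - 1) (C - 2) * int_choose X (C - 1) - int k * int_choose m (C - 1) * int_choose (X - 1) (C - 2)"
    unfolding count_formula_def i3 C_def m_def using n by simp
  have "1 \<le> m" using n unfolding m_def by simp
  then have p: "int_choose (X + 1) (C - 1) = int_choose X (C - 1) + int_choose X (C - 2)"
    "int_choose X (C - 2) = int_choose (X - 1) (C - 2) + int_choose (X - 1) (C - 3)"
    "int_choose (m + 1) (C - 1) = int_choose m (C - 1) + int_choose m (C - 2)"
    "int_choose m (C - 2) = int_choose (m - 1) (C - 2) + int_choose (m - 1) (C - 3)"
    using int_choose_pascal[of "X + 1" "C - 1"] int_choose_pascal[of X "C - 2"] X1
      int_choose_pascal[of "m + 1" "C - 1"] int_choose_pascal[of m "C - 2"] by simp_all
  show ?thesis unfolding e1 e2 e3 e4 e5 p(1,3) unfolding p(2,4) by (simp add: algebra_simps)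
qed

lemma count_formula_sum:
  assumes "1 \<le> k" "1 \<le> s" "1 \<le> c"
  shows "(\<Sum>j = 1..n. count_formula k (n - j) (s - 1 + j * k) (c - 1)) = count_formula k n s c - count_formula k n (s - 1) c"
  using assms(1,3) count_formula_step by (intro sum_shifted_telescope[OF _ _ assms(2)]) (simp_all add: count_formula_0)

lemma choose_absorption_product:
  assumes "1 \<le> M"
  shows "((n - 1) choose (M - 1)) * (n * k choose M) = k * (n choose M) * ((n * k - 1) choose (M - 1))"
proof -
  have "M * (((n - 1) choose (M - 1)) * (n * k choose M)) = ((n - 1) choose (M - 1)) * (n * k * ((n * k - 1) choose (M - 1)))"
    using assms by (simp add: times_binomial_minus1_eq)
  also have "\<dots> = k * (n * ((n - 1) choose (M - 1))) * ((n * k - 1) choose (M - 1))" by simp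
  also have "\<dots> = M * (k * (n choose M) * ((n * k - 1) choose (M - 1)))"
    using assms by (simp add: times_binomial_minus1_eq)
  finally show ?thesis using assms by simp
qed

lemma count_formula_root_0:
  assumes n: "1 \<le> n" and k: "1 \<le> k"
  shows "count_formula k n 0 c = 0"
proof (cases "2 \<le> c")
  case False
  then have "c = 0 \<or> c = 1" by auto
  then show ?thesis unfolding count_formula_def using n by (auto simp: int_choose_neg)
next
  case True
  define M where "M = c - 1"
  have M: "1 \<le> M" "int c - 1 = int M" "int c - 2 = int (M - 1)" using True unfolding M_def by auto
  have "1 \<le> n * k" using n k by simp
  then have "int n - 1 = int (n - 1)" "int (n * k) - 1 = int (n * k - 1)" using n by auto
  then have "count_formula k n 0 c = int ((n - 1) choose (M - 1)) * int (n * k choose M)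
      - int k * int (n choose M) * int ((n * k - 1) choose (M - 1))"
    unfolding count_formula_def using n by (simp add: M int_choose_of_nat del: of_nat_diff of_nat_mult)
  then show ?thesis using choose_absorption_product[OF M(1), of n k] by (simp flip: of_nat_mult)
qed

text \<open>The correction term at \<open>c = 2, n = u\<close> stands for the convention \<open>binom(-1, -1) = 1\<close>.\<close>
definition block_count_formula :: "nat \<Rightarrow> nat \<Rightarrow> nat \<Rightarrow> nat \<Rightarrow> nat \<Rightarrow> int" where
  "block_count_formula k u n s c =
     int s * int_choose (int (n * k + s) - 1) (int c - 2) * int_choose (int n - int u - 1) (int c - 3)
     + (if c = 2 \<and> n = u then int s else 0)"

text \<open>Contribution of the block split off by \<open>add_min\<close> when it has size \<open>uk\<close>.\<close>
definition new_block_formula :: "nat \<Rightarrow> nat \<Rightarrow> nat \<Rightarrow> nat \<Rightarrow> nat \<Rightarrow> int" where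
  "new_block_formula k u n s c = (if u \<le> n then count_formula k (n - u) (s - 1 + u * k) (c - 1) else 0)"

lemma new_block_formula_expand:
  assumes "u < n" "1 \<le> s" "1 \<le> c"
  shows "new_block_formula k u n s c
    = int_choose (int n - int u - 1) (int c - 3) * int_choose (int (n * k + s) - 1) (int c - 2)
      - int k * int_choose (int n - int u) (int c - 2) * int_choose (int (n * k + s) - 2) (int c - 3)"
proof -
  have "(n - u) * k + u * k = n * k" using assms(1) by (simp add: add_mult_distrib[symmetric])
  then have N: "int ((n - u) * k + (s - 1 + u * k)) = int (n * k + s) - 1" using assms(2) by linarith
  have C: "int (c - 1) - 2 = int c - 3" "int (c - 1) - 1 = int c - 2" using assms(3) by auto
  have "new_block_formula k u n s c = count_formula k (n - u) (s - 1 + u * k) (c - 1)"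
    using assms(1) unfolding new_block_formula_def by simp
  also have "\<dots> = int_choose (int (n - u) - 1) (int (c - 1) - 2) * int_choose (int ((n - u) * k + (s - 1 + u * k))) (int (c - 1) - 1)
      - int k * int_choose (int (n - u)) (int (c - 1) - 1) * int_choose (int ((n - u) * k + (s - 1 + u * k)) - 1) (int (c - 1) - 2)"
    using assms(1) unfolding count_formula_def by simp
  also have "\<dots> = int_choose (int n - int u - 1) (int c - 3) * int_choose (int (n * k + s) - 1) (int c - 2)
      - int k * int_choose (int n - int u) (int c - 2) * int_choose (int (n * k + s) - 2) (int c - 3)"
    unfolding N C using assms(1) by (simp add: of_nat_diff)
  finally show ?thesis .
qed

lemma block_count_formula_shifts:
  fixes X a :: int
  assumes s: "1 \<le> s" and c: "1 \<le> c" and X: "X = int ((n + 1) * k + s) - 1" and a: "a = int n - int u - 1"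
  shows "block_count_formula k u (n + 1) s c
           = int s * int_choose X (int c - 2) * int_choose (a + 1) (int c - 3) + (if c = 2 \<and> n + 1 = u then int s else 0)"
    and "block_count_formula k u (n + 1) (s - 1) c
           = (int s - 1) * int_choose (X - 1) (int c - 2) * int_choose (a + 1) (int c - 3)
             + (if c = 2 \<and> n + 1 = u then int s - 1 else 0)"
    and "block_count_formula k u n (s + k - 1) (c - 1)
           = (int s + int k - 1) * int_choose (X - 1) (int c - 3) * int_choose a (int c - 4)
             + (if c = 3 \<and> n = u then int s + int k - 1 else 0)"
    and "block_count_formula k u n (s + k) c
           = (int s + int k) * int_choose X (int c - 2) * int_choose a (int c - 3)
             + (if c = 2 \<and> n = u then int s + int k else 0)"
    and "block_count_formula k u n (s + k - 1) c
           = (int s + int k - 1) * int_choose (X - 1) (int c - 2) * int_choose a (int c - 3)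
             + (if c = 2 \<and> n = u then int s + int k - 1 else 0)"
proof -
  have i1: "int ((n + 1) * k + s) - 1 = X" using X by simp
  have i2: "int ((n + 1) * k + (s - 1)) - 1 = X - 1" using X s by simp
  have i3: "int (n * k + (s + k - 1)) - 1 = X - 1" using X s by (simp add: algebra_simps)
  have i4: "int (n * k + (s + k)) - 1 = X" using X by (simp add: algebra_simps)
  have ia: "int (n + 1) - int u - 1 = a + 1" using a by simp
  show "block_count_formula k u (n + 1) s c
           = int s * int_choose X (int c - 2) * int_choose (a + 1) (int c - 3) + (if c = 2 \<and> n + 1 = u then int s else 0)"
    unfolding block_count_formula_def i1 ia ..
  show "block_count_formula k u (n + 1) (s - 1) c
           = (int s - 1) * int_choose (X - 1) (int c - 2) * int_choose (a + 1) (int c - 3)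
             + (if c = 2 \<and> n + 1 = u then int s - 1 else 0)"
    unfolding block_count_formula_def i2 ia using s by (simp add: of_nat_diff)
  show "block_count_formula k u n (s + k - 1) (c - 1)
           = (int s + int k - 1) * int_choose (X - 1) (int c - 3) * int_choose a (int c - 4)
             + (if c = 3 \<and> n = u then int s + int k - 1 else 0)"
    unfolding block_count_formula_def i3 a[symmetric] using s c by (auto simp: of_nat_diff)
  show "block_count_formula k u n (s + k) c
           = (int s + int k) * int_choose X (int c - 2) * int_choose a (int c - 3)
             + (if c = 2 \<and> n = u then int s + int k else 0)"
    unfolding block_count_formula_def i4 a[symmetric] by simp
  show "block_count_formula k u n (s + k - 1) c
           = (int s + int k - 1) * int_choose (X - 1) (int c - 2) * int_choose a (int c - 3)
             + (if c = 2 \<and> n = u then int s + int k - 1 else 0)"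
    unfolding block_count_formula_def i3 a[symmetric] using s by (simp add: of_nat_diff)
qed

lemma block_count_formula_step:
  assumes k: "1 \<le> k" and s: "1 \<le> s" and c: "1 \<le> c" and u: "1 \<le> u"
  shows "block_count_formula k u (n + 1) s c - block_count_formula k u (n + 1) (s - 1) c - new_block_formula k u (n + 1) s c
       = block_count_formula k u n (s + k - 1) (c - 1)
         + (block_count_formula k u n (s + k) c - block_count_formula k u n (s + k - 1) c - new_block_formula k u n (s + k) c)"
proof -
  define X where "X = int ((n + 1) * k + s) - 1"
  define a where "a = int n - int u - 1"
  note H = block_count_formula_shifts[OF s c X_def a_def]
  have "(n + 1) * k \<ge> 1 * k" by (rule mult_le_mono1) simp
  then have X1: "1 \<le> X" using k s unfolding X_def by linarith
  consider "n + 1 < u" | "u = n + 1" | "u = n" | "u < n" by linarith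
  then show ?thesis
  proof cases
    case 1
    then have "a + 1 < 0" "a < 0" unfolding a_def by auto
    then show ?thesis unfolding H new_block_formula_def using 1 by (simp add: int_choose_neg_top)
  next
    case 2
    then have "a + 1 < 0" "a < 0" unfolding a_def by auto
    moreover have "new_block_formula k u (n + 1) s c = (if c = 2 then 1 else 0)"
      unfolding new_block_formula_def using 2 c by (auto simp: count_formula_0)
    ultimately show ?thesis unfolding H new_block_formula_def[of k u n] using 2 by (auto simp: int_choose_neg_top)
  next
    case 3
    then have "a + 1 = 0" "a < 0" unfolding a_def by auto
    then have ba: "int_choose a x = 0" "int_choose (a + 1) x = int_choose 0 x" for x by (simp_all add: int_choose_neg_top)
    have d1: "new_block_formula k u (n + 1) s c = int_choose 0 (int c - 3) * int_choose X (int c - 2)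
        - int k * int_choose 1 (int c - 2) * int_choose (X - 1) (int c - 3)"
      using new_block_formula_expand[of u "n + 1" s c k] 3 s c unfolding X_def by (simp add: algebra_simps)
    have d2: "new_block_formula k u n (s + k) c = (if c = 2 then 1 else 0)"
      unfolding new_block_formula_def using 3 c by (auto simp: count_formula_0)
    have "X - 1 \<ge> 1" if "c = 3"
    proof -
      have "(n + 1) * k \<ge> 2 * k" using 3 u by (intro mult_le_mono1) simp
      then show ?thesis using k s unfolding X_def by linarith
    qed
    then show ?thesis unfolding H d1 d2 ba using 3 X1
      by (cases "c = 3") (auto simp: int_choose_def X_def algebra_simps)
  next
    case 4
    then have a0: "0 \<le> a" unfolding a_def by simp
    have d1: "new_block_formula k u (n + 1) s c = int_choose (a + 1) (int c - 3) * int_choose X (int c - 2)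
        - int k * int_choose (a + 2) (int c - 2) * int_choose (X - 1) (int c - 3)"
      using new_block_formula_expand[of u "n + 1" s c k] 4 s c unfolding X_def a_def by (simp add: algebra_simps)
    have d2: "new_block_formula k u n (s + k) c = int_choose a (int c - 3) * int_choose X (int c - 2)
        - int k * int_choose (a + 1) (int c - 2) * int_choose (X - 1) (int c - 3)"
      using new_block_formula_expand[of u n "s + k" c k] 4 s c unfolding X_def a_def by (simp add: algebra_simps)
    have p1: "int_choose X (int c - 2) = int_choose (X - 1) (int c - 2) + int_choose (X - 1) (int c - 3)"
      using int_choose_pascal[OF X1, of "int c - 2"] by simp
    have p2: "int_choose (a + 1) b = int_choose a b + int_choose a (b - 1)" for b
      using int_choose_pascal[of "a + 1" b] a0 by simp
    have p3: "int_choose (a + 2) (int c - 2) = int_choose (a + 1) (int c - 2) + int_choose (a + 1) (int c - 3)"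
      using int_choose_pascal[of "a + 2" "int c - 2"] a0 by (simp add: ac_simps)
    show ?thesis unfolding H d1 d2 p3 p2 p1 using 4 by (simp add: algebra_simps)
  qed
qed

lemma block_count_formula_0: "1 \<le> u \<Longrightarrow> block_count_formula k u 0 s c = 0"
  unfolding block_count_formula_def by (simp add: int_choose_neg_top)

lemma block_count_formula_no_blocks: "block_count_formula k u n s 0 = 0"
  unfolding block_count_formula_def by (simp add: int_choose_neg)

lemma block_count_formula_root_0: "block_count_formula k u n 0 c = 0"
  unfolding block_count_formula_def by simp

lemma block_count_formula_sum:
  assumes "1 \<le> k" "1 \<le> s" "1 \<le> c" "1 \<le> u"
  shows "(\<Sum>j = 1..n. block_count_formula k u (n - j) (s - 1 + j * k) (c - 1))
       = block_count_formula k u n s c - block_count_formula k u n (s - 1) c - new_block_formula k u n s c"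
  using assms(1,3,4) block_count_formula_step
  by (intro sum_shifted_telescope[OF _ _ assms(2)]) (simp_all add: block_count_formula_0 new_block_formula_def)

section \<open>Solving the recursions\<close>

lemma sum_shifted_root_sizes:
  fixes f :: "nat \<Rightarrow> nat" and F :: "nat \<Rightarrow> nat \<Rightarrow> int"
  assumes k: "0 < k" and N: "n \<le> N"
    and IH: "\<And>n' s'. n' * k + s' = n * k + s0 \<Longrightarrow> 1 \<le> s' \<Longrightarrow> int (f s') = F n' s'"
    and big: "\<And>s'. n * k + s0 < s' \<Longrightarrow> f s' = 0"
  shows "(\<Sum>j = 1..N. int (f (s0 + j * k))) = (\<Sum>j = 1..n. F (n - j) (s0 + j * k))"
proof -
  have "(\<Sum>j = 1..N. int (f (s0 + j * k))) = (\<Sum>j = 1..N. if j \<le> n then F (n - j) (s0 + j * k) else 0)"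
  proof (rule sum.cong[OF refl])
    fix j assume j: "j \<in> {1..N}"
    show "int (f (s0 + j * k)) = (if j \<le> n then F (n - j) (s0 + j * k) else 0)"
    proof (cases "j \<le> n")
      case True
      then have "(n - j) * k + (s0 + j * k) = n * k + s0"
        using mult_le_mono1[OF True, of k] by (simp add: diff_mult_distrib)
      moreover have "1 \<le> s0 + j * k" using j k by (simp add: Suc_le_eq)
      ultimately show ?thesis using IH True by simp
    next
      case False
      then have "n * k < j * k" using k by simp
      then show ?thesis using big False by simp
    qed
  qed
  also have "\<dots> = (\<Sum>j \<in> {j \<in> {1..N}. j \<le> n}. F (n - j) (s0 + j * k))"
    by (rule sum.inter_filter[symmetric]) simp
  also have "{j \<in> {1..N}. j \<le> n} = {1..n}" using N by auto
  finally show ?thesis .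
qed

lemma NC_rooted_singleton: "NC_rooted k {t} = {{{t}}}"
proof -
  have "partition_on {t} P \<longleftrightarrow> P = {{t}}" for P :: "nat set set"
  proof
    assume P: "partition_on {t} P"
    then have "B = {t}" if "B \<in> P" for B
      using partition_onD1[OF P] partition_onD3[OF P] that subset_singleton_iff[of B t] by blast
    then have "P \<subseteq> {{t}}" by blast
    moreover have "P \<noteq> {}" using partition_onD1[OF P] by auto
    ultimately show "P = {{t}}" by (simp add: subset_singleton_iff)
  qed (simp add: partition_on_space)
  moreover have "noncrossing {{t}}" by (rule noncrossingI) simp
  ultimately show ?thesis unfolding NC_rooted_def by auto
qed

lemma nc_count_singleton: "nc_count k {t} s c = (if s = 1 \<and> c = 1 then 1 else 0)"
proof -
  have "block_of {{t}} t = {t}" by (rule block_of_eq[OF partition_on_space]) auto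
  then have "{P \<in> {{{t}}}. card (block_of P t) = s \<and> card P = c} = (if s = 1 \<and> c = 1 then {{{t}}} else {})"
    by auto
  then show ?thesis unfolding nc_count_def NC_rooted_singleton by simp
qed

lemma nc_block_count_singleton: "nc_block_count k u {t} s c = 0"
proof -
  have "block_of {{t}} t = {t}" by (rule block_of_eq[OF partition_on_space]) auto
  then show ?thesis unfolding nc_block_count_def NC_rooted_singleton by simp
qed

lemma card_root_le:
  assumes "finite T" "T \<noteq> {}" "P \<in> NC_rooted k T"
  shows "card (block_of P (Min T)) \<le> card T"
proof -
  have part: "partition_on T P" using assms(3) unfolding NC_rooted_def by simp
  have "block_of P (Min T) \<in> P" using block_of_mem[OF part] assms(1,2) by simp
  then have "block_of P (Min T) \<subseteq> T" using partition_onD1[OF part] by blast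
  then show ?thesis using card_mono[OF assms(1)] by blast
qed

lemma no_root_of_size:
  assumes "finite T" "T \<noteq> {}" "card T < s"
  shows "{P \<in> NC_rooted k T. card (block_of P (Min T)) = s \<and> card P = c} = {}"
proof -
  have "card (block_of P (Min T)) \<noteq> s" if "P \<in> NC_rooted k T" for P
    using card_root_le[OF assms(1,2) that] assms(3) by linarith
  then show ?thesis by blast
qed

lemma nc_count_eq_0: "finite T \<Longrightarrow> T \<noteq> {} \<Longrightarrow> card T < s \<Longrightarrow> nc_count k T s c = 0"
  unfolding nc_count_def by (simp add: no_root_of_size)

lemma nc_block_count_eq_0: "finite T \<Longrightarrow> T \<noteq> {} \<Longrightarrow> card T < s \<Longrightarrow> nc_block_count k u T s c = 0"
  unfolding nc_block_count_def by (simp add: no_root_of_size)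

lemma min_split_Min:
  assumes "0 < k" "finite T" "2 \<le> card T"
  shows "min_split k T (T - {Min T}) (Min T) (Min (T - {Min T}))"
proof
  have "T \<noteq> {}" using assms(3) by auto
  then have "card (T - {Min T}) = card T - 1" using assms(2) by simp
  then show "T - {Min T} \<noteq> {}" using assms(3) by (intro notI) simp
qed (use assms in simp_all)

context min_split
begin

lemma nc_count_formula_step:
  assumes IH: "\<And>n' s' c'. card T' = n' * k + s' \<Longrightarrow> 1 \<le> s' \<Longrightarrow> int (nc_count k T' s' c') = count_formula k n' s' c'"
    and card: "card T = n * k + s" and s: "1 \<le> s"
  shows "int (nc_count k T s c) = count_formula k n s c"
proof -
  have card': "card T' = n * k + (s - 1)" using card card_T' s by simp
  have k: "1 \<le> k" using k_pos by simp
  have shorter: "int (if 2 \<le> s then nc_count k T' (s - 1) c else 0) = count_formula k n (s - 1) c"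
  proof (cases "2 \<le> s")
    case False
    then have "s = 1" using s by simp
    moreover have "1 \<le> n" using card' \<open>s = 1\<close> T'_nonempty finite_T' by (cases n) auto
    ultimately show ?thesis using count_formula_root_0[OF _ k] by simp
  qed (simp add: IH card')
  have "n \<le> n * k" using k_pos by simp
  then have "n \<le> card T" using card by linarith
  then have "(\<Sum>j = 1..card T. int (nc_count k T' (s - 1 + j * k) (c - 1)))
      = (\<Sum>j = 1..n. count_formula k (n - j) (s - 1 + j * k) (c - 1))"
    using IH card' nc_count_eq_0[OF finite_T' T'_nonempty]
    by (intro sum_shifted_root_sizes[OF k_pos]) auto
  then show ?thesis
    using nc_count_rec[OF s, of c] shorter count_formula_sum[OF k s, of c n] count_formula_no_blocks
    by (cases "c = 0") (simp_all add: of_nat_sum)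
qed

end

lemma nc_count_formula:
  assumes "0 < k" "finite T" "card T = n * k + s" "1 \<le> s"
  shows "int (nc_count k T s c) = count_formula k n s c"
  using assms(2-4)
proof (induction T arbitrary: n s c rule: finite_remove_induct)
  case empty
  then show ?case by simp
next
  case (remove T)
  show ?case
  proof (cases "card T = 1")
    case True
    then obtain t where "T = {t}" by (rule card_1_singletonE)
    moreover have "n = 0" "s = 1" using True remove.prems assms(1) by (auto simp: add_is_1)
    ultimately show ?thesis by (simp add: nc_count_singleton count_formula_0)
  next
    case False
    then have "2 \<le> card T" using remove.hyps(2) remove.hyps(1) card_0_eq by fastforce
    from min_split_Min[OF assms(1) remove.hyps(1) this]
    show ?thesis
      by (rule min_split.nc_count_formula_step) (use remove.IH[of "Min T"] remove.hyps remove.prems in auto)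
  qed
qed

context min_split
begin

lemma nc_count_new_block:
  assumes card: "card T = n * k + s" and s: "1 \<le> s" and u: "1 \<le> u"
  shows "int (if u \<le> card T then nc_count k T' (s - 1 + u * k) (c - 1) else 0) = new_block_formula k u n s c"
proof (cases "u \<le> n")
  case True
  have "n \<le> n * k" using k_pos by simp
  then have "u \<le> card T" using True card by linarith
  moreover have "card T' = (n - u) * k + (s - 1 + u * k)"
    using True card card_T' s mult_le_mono1[OF True, of k] by (simp add: diff_mult_distrib)
  moreover have "1 \<le> s - 1 + u * k" using u k_pos by (simp add: Suc_le_eq)
  ultimately show ?thesis
    using nc_count_formula[OF k_pos finite_T'] True unfolding new_block_formula_def by simp
next
  case False
  then have "n * k + k \<le> u * k" using mult_le_mono1[of "Suc n" u k] by simp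
  then have "card T' < s - 1 + u * k" using card card_T' s k_pos by linarith
  then show ?thesis using False nc_count_eq_0[OF finite_T' T'_nonempty] unfolding new_block_formula_def by simp
qed

lemma nc_block_count_formula_step:
  assumes IH: "\<And>n' s' c'. card T' = n' * k + s' \<Longrightarrow> 1 \<le> s'
                  \<Longrightarrow> int (nc_block_count k u T' s' c') = block_count_formula k u n' s' c'"
    and card: "card T = n * k + s" and s: "1 \<le> s" and u: "1 \<le> u"
  shows "int (nc_block_count k u T s c) = block_count_formula k u n s c"
proof -
  have card': "card T' = n * k + (s - 1)" using card card_T' s by simp
  have k: "1 \<le> k" using k_pos by simp
  have shorter: "int (if 2 \<le> s then nc_block_count k u T' (s - 1) c else 0) = block_count_formula k u n (s - 1) c"
    using s IH card' block_count_formula_root_0 by (cases "2 \<le> s") auto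
  have "n \<le> n * k" using k_pos by simp
  then have "n \<le> card T" using card by linarith
  then have "(\<Sum>j = 1..card T. int (nc_block_count k u T' (s - 1 + j * k) (c - 1)))
      = (\<Sum>j = 1..n. block_count_formula k u (n - j) (s - 1 + j * k) (c - 1))"
    using IH card' nc_block_count_eq_0[OF finite_T' T'_nonempty]
    by (intro sum_shifted_root_sizes[OF k_pos]) auto
  then show ?thesis
    using nc_block_count_rec[OF s u, of c] shorter nc_count_new_block[OF card s u, of c]
      block_count_formula_sum[OF k s _ u, where c = c and n = n] block_count_formula_no_blocks
    by (cases "c = 0") (simp_all add: of_nat_sum)
qed

end

lemma nc_block_count_formula:
  assumes "0 < k" "1 \<le> u" "finite T" "card T = n * k + s" "1 \<le> s"
  shows "int (nc_block_count k u T s c) = block_count_formula k u n s c"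
  using assms(3-5)
proof (induction T arbitrary: n s c rule: finite_remove_induct)
  case empty
  then show ?case by simp
next
  case (remove T)
  show ?case
  proof (cases "card T = 1")
    case True
    then obtain t where "T = {t}" by (rule card_1_singletonE)
    moreover have "n = 0" using True remove.prems assms(1) by (auto simp: add_is_1)
    ultimately show ?thesis using assms(2) by (simp add: nc_block_count_singleton block_count_formula_0)
  next
    case False
    then have "2 \<le> card T" using remove.hyps(2) remove.hyps(1) card_0_eq by fastforce
    from min_split_Min[OF assms(1) remove.hyps(1) this]
    show ?thesis
      by (rule min_split.nc_block_count_formula_step)
        (use remove.IH[of "Min T"] remove.hyps remove.prems assms(2) in auto)
  qed
qed

section \<open>Partitions in \<open>NC\<^sup>k(n)\<close> as rooted partitions\<close>

lemma NCk_insert_root: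
  assumes P: "P \<in> NCk k n"
  shows "insert {0} P \<in> NC_rooted k {0..k * n}" and "block_of (insert {0} P) 0 = {0}" and "{0} \<notin> P"
proof -
  have part: "partition_on {1..k * n} P" and nc: "noncrossing P" and dvd: "\<forall>B\<in>P. k dvd card B"
    using P unfolding NCk_def by auto
  have "0 \<notin> \<Union>P" unfolding partition_onD1[OF part, symmetric] by simp
  then show "{0} \<notin> P" by blast
  have "disjnt {0} (\<Union>P)" using \<open>0 \<notin> \<Union>P\<close> by (simp add: disjnt_def)
  moreover have "{0..k * n} - {0} = {1..k * n}" by auto
  ultimately have part0: "partition_on {0..k * n} (insert {0} P)"
    using part by (simp add: partition_on_insert)
  have "noncrossing (insert {0} P)"
  proof (rule noncrossingI)
    fix X Y a b c d
    assume "X \<in> insert {0} P" "Y \<in> insert {0} P" "X \<noteq> Y" "a < b" "b < c" "c < d"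
      "a \<in> X" "c \<in> X" "b \<in> Y" "d \<in> Y"
    moreover from this have "X \<in> P" "Y \<in> P" by auto
    ultimately show False using noncrossingD[OF nc] by blast
  qed
  moreover have "Min {0..k * n} = (0::nat)" by (simp add: Min_eq_iff)
  ultimately show "insert {0} P \<in> NC_rooted k {0..k * n}"
    unfolding NC_rooted_def using part0 dvd by auto
  show "block_of (insert {0} P) 0 = {0}" by (rule block_of_eq[OF part0]) auto
qed

lemma NC_rooted_remove_root:
  assumes Q: "Q \<in> NC_rooted k {0..k * n}" and root: "card (block_of Q 0) = 1"
  shows "{0} \<in> Q" and "Q - {{0}} \<in> NCk k n"
proof -
  have "Min {0..k * n} = (0::nat)" by (simp add: Min_eq_iff)
  then have part: "partition_on {0..k * n} Q" and nc: "noncrossing Q"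
    and dvd: "\<And>B. B \<in> Q \<Longrightarrow> 0 \<notin> B \<Longrightarrow> k dvd card B"
    using Q unfolding NC_rooted_def by auto
  note mem = block_of_mem[OF part, of 0]
  then have "block_of Q 0 = {0}" using root by (auto simp: card_1_singleton_iff)
  then show Q0: "{0} \<in> Q" using mem by simp
  have "disjnt {0} (\<Union>(Q - {{0}}))"
    using partition_onD2[OF part] Q0 by (auto simp: disjnt_def dest: disjointD)
  moreover have "insert {0} (Q - {{0}}) = Q" using Q0 by blast
  moreover have "{0..k * n} - {0} = {1..k * n}" by auto
  ultimately have part': "partition_on {1..k * n} (Q - {{0}})"
    using part partition_on_insert[of "{0}" "Q - {{0}}" "{0..k * n}"] by simp
  have "noncrossing (Q - {{0}})" by (rule noncrossing_refine[OF nc, where g = id]) auto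
  moreover have "k dvd card B" if B: "B \<in> Q - {{0}}" for B
  proof -
    have "0 \<notin> \<Union>(Q - {{0}})" unfolding partition_onD1[OF part', symmetric] by simp
    then have "0 \<notin> B" using B by blast
    with B show ?thesis using dvd by blast
  qed
  ultimately show "Q - {{0}} \<in> NCk k n" unfolding NCk_def using part' by auto
qed

lemma sum_NCk_blocks_eq_nc_block_count:
  "(\<Sum>P\<in>{P \<in> NCk k n. card P = m}. card {B \<in> P. card B = t * k}) = nc_block_count k t {0..k * n} 1 (m + 1)"
proof -
  have Min: "Min {0..k * n} = (0::nat)" by (simp add: Min_eq_iff)
  let ?A = "{P \<in> NCk k n. card P = m}"
  let ?B = "{Q \<in> NC_rooted k {0..k * n}. card (block_of Q 0) = 1 \<and> card Q = m + 1}"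
  have finite: "finite P" if "P \<in> NCk k n" for P
    using that finite_elements[of "{1..k * n}"] unfolding NCk_def by auto
  have "bij_betw (insert {0}) ?A ?B"
  proof (rule bij_betw_byWitness[where f' = "\<lambda>Q. Q - {{0}}"])
    show "\<forall>P\<in>?A. insert {0} P - {{0}} = P" using NCk_insert_root(3) by blast
    show "\<forall>Q\<in>?B. insert {0} (Q - {{0}}) = Q" using NC_rooted_remove_root(1) by blast
    show "insert {0} ` ?A \<subseteq> ?B" using NCk_insert_root finite by auto
    have "card (Q - {{0}}) = m" if "Q \<in> ?B" for Q
      using that NC_rooted_remove_root(1) finite_NC_rooted finite_elements[of "{0..k * n}" Q]
      unfolding NC_rooted_def by auto
    then show "(\<lambda>Q. Q - {{0}}) ` ?B \<subseteq> ?A" using NC_rooted_remove_root(2) by auto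
  qed
  then have "(\<Sum>P\<in>?A. card {B \<in> insert {0} P. B \<noteq> block_of (insert {0} P) 0 \<and> card B = t * k})
      = (\<Sum>Q\<in>?B. card {B \<in> Q. B \<noteq> block_of Q 0 \<and> card B = t * k})"
    by (rule sum.reindex_bij_betw)
  moreover have "{B \<in> insert {0} P. B \<noteq> block_of (insert {0} P) 0 \<and> card B = t * k} = {B \<in> P. card B = t * k}"
    if "P \<in> ?A" for P
    using that NCk_insert_root[of P k n] by auto
  ultimately show ?thesis unfolding nc_block_count_def Min by simp
qed

lemma block_count_formula_ibinom:
  assumes "0 < m"
  shows "block_count_formula k t n 1 (m + 1) = ibinom (int (n * k)) (int m - 1) * ibinom (int n - int t - 1) (int m - 2)"
proof -
  have "ibinom (int (n * k)) (int m - 1) = int_choose (int (n * k)) (int m - 1)"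
    "ibinom (int n - int t - 1) (int m - 2) = int_choose (int n - int t - 1) (int m - 2) + (if m = 1 \<and> n = t then 1 else 0)"
    unfolding ibinom_def int_choose_def using assms by auto
  moreover have "int_choose (int (n * k)) 0 = 1" by (simp add: int_choose_0)
  ultimately show ?thesis
    unfolding block_count_formula_def using assms by (cases "m = 1") (auto simp: int_choose_neg algebra_simps)
qed

theorem proposition2p1:
  fixes k n m t :: nat
  assumes "k > 0" and "n > 0" and "m > 0" and "t > 0"
  shows "int (\<Sum>P\<in>{P\<in>NCk k n. card P = m}. card {B\<in>P. card B = t * k})
         = ibinom (int (n * k)) (int m - 1) * ibinom (int n - int t - 1) (int m - 2)"
proof -
  have "card {0..k * n} = n * k + 1" by simp
  then have "int (nc_block_count k t {0..k * n} 1 (m + 1)) = block_count_formula k t n 1 (m + 1)"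
    using assms(1,3,4) by (intro nc_block_count_formula) auto
  then show ?thesis
    unfolding sum_NCk_blocks_eq_nc_block_count block_count_formula_ibinom[OF assms(3)] .
qed

end
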